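(* Consider the following setting. Let $\mathcal{X}\subseteq\mathbb{R}^D$, $\mathcal{Y}=\{1,\dots,C\}$, $\mathcal{O}$ an output space, $f:\mathcal{X}\to\mathcal{O}$ a fixed deployed model, $\ell:\mathcal{O}\times\mathcal{Y}\to[0,1]$ a loss, and $f_{\mathrm{p}}$ a fixed predictive model; the synthetic label of $x$ is $\tilde y=\arg\max_c f_{\mathrm{p}}(x)[c]$. Let $P_0$ (source) and $P_1,P_2,\dots$ (test) be distributions on $\mathcal{X}\times\mathcal{Y}$, with $R_t=\mathbb{E}_{(x,y)\sim P_t}[\ell(f(x),y)]$ for $t\ge0$ and running test risk $\bar R_t=\frac1t\sum_{t'=1}^tR_{t'}$. At each time $t\ge1$, a labeled batch $\{(x_{t,i},y_{t,i})\}_{i=1}^{n_t}$ ($n_t\ge1$) i.i.d. from $P_t$ and an unlabeled batch $\{\tilde x_{t,j}\}_{j=n_t+1}^{n_t+N_t}$ ($N_t\ge1$) i.i.d. from the $\mathcal{X}$-marginal of $P_t$ are observed; source data (labeled and unlabeled) are drawn from $P_0$; all samples are mutually independent. Fix $\eta_{\max}>0$ and let $\{\eta_t\}_{t\ge1}$ with $\eta_t\in[0,\eta_{\max}]$ be any predictable sequence (each $\eta_t$ a function only of the data and synthetic labels observed at times $1,\dots,t-1$). Define the per-step estimate $$\hat R^{\mathrm{PP}}_t=\frac{\eta_t}{N_t}\sum_{j=n_t+1}^{n_t+N_t}\ell(f(\tilde x_{t,j}),\tilde y_{t,j})+\frac1{n_t}\sum_{i=1}^{n_t}\ell(f(x_{t,i}),y_{t,i})-\frac{\eta_t}{n_t}\sum_{i=1}^{n_t}\ell(f(x_{t,i}),\tilde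 y_{t,i}),$$ and $\hat{\bar R}^{\mathrm{PP}}_t=\frac1t\sum_{t'=1}^t\hat R^{\mathrm{PP}}_{t'}$. Let $Z_t=(\hat R^{\mathrm{PP}}_t+\eta_{\max})/(1+2\eta_{\max})\in[0,1]$, $\bar Z_t=\frac1t\sum_{t'=1}^tZ_{t'}$, $\bar Z_0$ a fixed constant in $[0,1]$, and $V_t^{\mathrm{PP}}=\sum_{t'=1}^t(Z_{t'}-\bar Z_{t'-1})^2$. Fix $\delta_{\mathrm S},\delta_{\mathrm T}\in(0,1)$ with $\delta_{\mathrm S}+\delta_{\mathrm T}\in(0,1)$, a probability distribution $q$ on $[0,1)$, let $\psi_E(\lambda)=-\log(1-\lambda)-\lambda$, and $u(V)=\sup\{S:\int_0^1q(\lambda)\exp(\lambda S-\psi_E(\lambda)V)\,d\lambda<1/\delta_{\mathrm T}\}$. Define the lower bound $L^{\mathrm{PP}}_t=\hat{\bar R}^{\mathrm{PP}}_t-(1+2\eta_{\max})\,u(V^{\mathrm{PP}}_t)/t$. Let $U_0^{\mathrm{PP}}$ be an upper bound on the source risk computed from the source data only and satisfying $\mathbb{P}(R_0\le U_0^{\mathrm{PP}})\ge1-\delta_{\mathrm S}$. For a tolerance $\epsilon_{\mathrm{tol}}>0$, define the alarm $\Phi^{\mathrm{PP}}_t=\mathbb{1}[L^{\mathrm{PP}}_t>U_0^{\mathrm{PP}}+\epsilon_{\mathrm{tol}}]$. Then for every sequence $P_1,P_2,\dots$ satisfying the null hypothesis $\mathcal{H}_0$: $\bar R_t\le R_0+\epsilon_{\mathrm{tol}}$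 for all $t\ge1$, $$\mathbb{P}\big(\exists\,t\ge1:\ \Phi^{\mathrm{PP}}_t=1\big)\le\delta_{\mathrm S}+\delta_{\mathrm T}.$$
   Context: This is the probability-of-false-alarm guarantee for prediction-powered risk monitoring (PPRM). In the paper, $U_0^{\mathrm{PP}}=\hat R_0^{\mathrm{PP}}+w_0^{\mathrm{PP}}$ where $\hat R_0^{\mathrm{PP}}$ is the analogous prediction-powered estimate on source data and $w_0^{\mathrm{PP}}$ is obtained from a betting-based confidence bound ensuring $\mathbb{P}(R_0\le U_0^{\mathrm{PP}})\ge1-\delta_{\mathrm S}$. *)

theory Defs
  imports "HOL-Probability.Probability"
begin

text \<open>Index of an observed sample: Lab t i is the i-th labeled sample (i < n t) of time t,
  Unl t j is the j-th unlabeled sample (j < N t) of time t.  Time 0 is the source.\<close>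
datatype sidx = Lab nat nat | Unl nat nat

fun sidx_time :: "sidx \<Rightarrow> nat" where
  "sidx_time (Lab t i) = t"
| "sidx_time (Unl t j) = t"

definition sample_index :: "(nat \<Rightarrow> nat) \<Rightarrow> (nat \<Rightarrow> nat) \<Rightarrow> sidx set" where
  "sample_index n N = {Lab t i | t i. i < n t} \<union> {Unl t j | t j. j < N t}"

definition sample_sets ::
  "'a measure \<Rightarrow> (nat \<Rightarrow> nat \<Rightarrow> 'a \<Rightarrow> real^'d) \<Rightarrow> (nat \<Rightarrow> nat \<Rightarrow> 'a \<Rightarrow> 'y)
    \<Rightarrow> (nat \<Rightarrow> nat \<Rightarrow> 'a \<Rightarrow> real^'d) \<Rightarrow> sidx \<Rightarrow> 'a set set" where
  "sample_sets M Xl Yl Xu k = (case k of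
      Lab t i \<Rightarrow> {(\<lambda>\<omega>. (Xl t i \<omega>, Yl t i \<omega>)) -` A \<inter> space M | A.
                    A \<in> sets (borel \<Otimes>\<^sub>M count_space UNIV)}
    | Unl t j \<Rightarrow> {Xu t j -` A \<inter> space M | A. A \<in> sets borel})"

definition data_sigma ::
  "'a measure \<Rightarrow> (nat \<Rightarrow> nat \<Rightarrow> 'a \<Rightarrow> real^'d) \<Rightarrow> (nat \<Rightarrow> nat \<Rightarrow> 'a \<Rightarrow> 'y)
    \<Rightarrow> (nat \<Rightarrow> nat \<Rightarrow> 'a \<Rightarrow> real^'d) \<Rightarrow> (nat \<Rightarrow> nat) \<Rightarrow> (nat \<Rightarrow> nat) \<Rightarrow> nat set \<Rightarrow> 'a measure" where
  "data_sigma M Xl Yl Xu n N T = sigma (space M)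
     (\<Union> {sample_sets M Xl Yl Xu k | k. k \<in> sample_index n N \<and> sidx_time k \<in> T})"

definition synth_label :: "(real^'d \<Rightarrow> 'y::finite \<Rightarrow> real) \<Rightarrow> real^'d \<Rightarrow> 'y" where
  "synth_label fp x = arg_max_on (fp x) UNIV"

definition psiE :: "real \<Rightarrow> real" where
  "psiE l = - ln (1 - l) - l"

definition u_bound :: "real measure \<Rightarrow> real \<Rightarrow> real \<Rightarrow> ereal" where
  "u_bound Q \<delta>T V = Sup {ereal S | S.
      (\<integral>\<^sup>+ l. ennreal (exp (l * S - psiE l * V)) \<partial>Q) < ennreal (1 / \<delta>T)}"

end

theory Submission
  imports Defs
begin

(*
  Since
  eta_t is predictable and, given the past, the unlabeled and the labeled synthetic losses have
  the same mean, Z_t has conditional mean mu_t = (R_t + eta_max) / (1 + 2 eta_max).  Fan's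
  inequality exp (l x - psiE l x^2) <= 1 + l x  (x >= -1) makes
  exp (l * sum_{s<=t} (Z_s - mu_s) - psiE l * V_t), and hence its mixture over l ~ Q, a
  nonnegative supermartingale started at 1.  By Ville's inequality the mixture ever reaches
  1/deltaT with probability at most deltaT; off that event the definition of u gives
  sum_{s<=t} (Z_s - mu_s) <= u (V_t) for all t, i.e. L_t <= Rbar_t <= R_0 + eps_tol.  An alarm
  therefore also requires R_0 > U_0, which has probability at most deltaS.
*)

lemma psiE_ge_half_square:
  fixes l :: real assumes "0 \<le> l" "l < 1" shows "l\<^sup>2 / 2 \<le> psiE l"
proof -
  let ?g = "\<lambda>x::real. - ln (1 - x) - x - x\<^sup>2 / 2"
  have "?g 0 \<le> ?g l"
  proof (rule DERIV_nonneg_imp_increasing_open[OF assms(1)])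
    fix x assume x: "0 < x" "x < l"
    then have "1 - x > 0" using assms by simp
    have "DERIV ?g x :> 1 / (1 - x) - 1 - x"
      using \<open>1 - x > 0\<close> by (auto intro!: derivative_eq_intros simp: field_simps power2_eq_square)
    moreover have "1 / (1 - x) - 1 - x \<ge> 0"
      using \<open>1 - x > 0\<close> x by (simp add: field_simps)
    ultimately show "\<exists>y. DERIV ?g x :> y \<and> 0 \<le> y" by blast
  next
    show "continuous_on {0..l} ?g"
      using assms by (auto intro!: continuous_intros)
  qed
  then show ?thesis by (simp add: psiE_def)
qed

lemma psiE_nonneg:
  fixes l :: real assumes "0 \<le> l" "l < 1" shows "0 \<le> psiE l"
proof -
  have "0 \<le> l\<^sup>2 / 2" by simp
  then show ?thesis using psiE_ge_half_square[OF assms] by linarith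
qed

lemma psiE_measurable [measurable]: "psiE \<in> borel_measurable borel"
  unfolding psiE_def[abs_def] by measurable

lemma one_plus_mult_pos:
  fixes l x :: real assumes "0 \<le> l" "l < 1" "-1 \<le> x" shows "0 < 1 + l * x"
  using mult_left_mono[OF assms(3,1)] assms(2) by simp

lemma fan_gap_has_derivative:
  fixes l x :: real assumes "0 \<le> l" "l < 1" "-1 \<le> x"
  shows "((\<lambda>x. psiE l * x\<^sup>2 - l * x + ln (1 + l * x)) has_real_derivative
      x * (2 * psiE l * (1 + l * x) - l\<^sup>2) / (1 + l * x)) (at x)"
proof -
  have pos: "0 < 1 + l * x"
    by (rule one_plus_mult_pos[OF assms])
  then have "((\<lambda>x. psiE l * x\<^sup>2 - l * x + ln (1 + l * x)) has_real_derivative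
      psiE l * (2 * x) - l + l / (1 + l * x)) (at x)"
    by (auto intro!: derivative_eq_intros)
  also have "psiE l * (2 * x) - l + l / (1 + l * x) = x * (2 * psiE l * (1 + l * x) - l\<^sup>2) / (1 + l * x)"
    using pos by (simp add: field_simps power2_eq_square)
  finally show ?thesis .
qed

text \<open>The gap h x = psiE l x^2 - l x + ln (1 + l x) between the two sides vanishes at 0 and
  at -1, and its derivative has the sign of x (2 psiE l (1 + l x) - l^2) where 2 psiE l \<ge> l^2:
  so h increases on [0, \<infinity>) and, on [-1, 0], first increases and then decreases.\<close>
lemma fan_inequality_ln:
  fixes l \<xi> :: real assumes l: "0 \<le> l" "l < 1" and \<xi>: "-1 \<le> \<xi>"
  shows "l * \<xi> - psiE l * \<xi>\<^sup>2 \<le> ln (1 + l * \<xi>)"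
proof -
  define h where "h = (\<lambda>x. psiE l * x\<^sup>2 - l * x + ln (1 + l * x))"
  define h' where "h' x = x * (2 * psiE l * (1 + l * x) - l\<^sup>2) / (1 + l * x)" for x
  have dh: "DERIV h x :> h' x" if "-1 \<le> x" for x
    using fan_gap_has_derivative[OF l that] by (simp add: h_def h'_def)
  have cont: "continuous_on {a..b} h" if "-1 \<le> a" for a b
  proof -
    have "\<forall>x\<in>{a..b}. 0 < 1 + l * x" using one_plus_mult_pos[OF l] that by auto
    then show ?thesis unfolding h_def by (auto intro!: continuous_intros)
  qed
  have pos: "0 < 1 + l * x" if "-1 \<le> x" for x
    by (rule one_plus_mult_pos[OF l that])
  have psiE: "l\<^sup>2 \<le> 2 * psiE l" "0 \<le> psiE l"
    using psiE_ge_half_square[OF l] psiE_nonneg[OF l] by simp_all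
  have factor_mono: "2 * psiE l * (1 + l * x) \<le> 2 * psiE l * (1 + l * y)" if "x \<le> y" for x y
    using mult_left_mono[OF that l(1)] psiE(2) by (simp add: mult_left_mono)
  have "0 \<le> h \<xi>"
  proof (cases "0 \<le> \<xi>")
    case True
    have "h 0 \<le> h \<xi>"
    proof (rule DERIV_nonneg_imp_increasing_open[OF True _ cont])
      fix x assume x: "0 < x" "x < \<xi>"
      have "0 \<le> h' x"
        using factor_mono[of 0 x] x psiE pos[of x] unfolding h'_def
        by (intro divide_nonneg_pos mult_nonneg_nonneg) auto
      then show "\<exists>y. DERIV h x :> y \<and> 0 \<le> y" using dh[of x] x by auto
    qed simp
    then show ?thesis by (simp add: h_def)
  next
    case False
    show ?thesis
    proof (cases "l\<^sup>2 \<le> 2 * psiE l * (1 + l * \<xi>)")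
      case True
      have "h 0 \<le> h \<xi>"
      proof (rule DERIV_nonpos_imp_decreasing_open[of \<xi> 0 h])
        fix x assume x: "\<xi> < x" "x < 0"
        have "h' x \<le> 0"
          using factor_mono[of \<xi> x] True x pos[of x] \<xi> unfolding h'_def
          by (intro divide_nonpos_pos mult_nonpos_nonneg) auto
        then show "\<exists>y. DERIV h x :> y \<and> y \<le> 0" using dh[of x] x \<xi> by auto
      qed (use False cont \<xi> in auto)
      then show ?thesis by (simp add: h_def)
    next
      case not_le: False
      have "h (-1) \<le> h \<xi>"
      proof (rule DERIV_nonneg_imp_increasing_open[OF \<xi> _ cont])
        fix x assume x: "-1 < x" "x < \<xi>"
        have "0 \<le> h' x"
          using factor_mono[of x \<xi>] not_le x False pos[of x] unfolding h'_def
          by (intro divide_nonneg_pos mult_nonpos_nonpos) auto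
        then show "\<exists>y. DERIV h x :> y \<and> 0 \<le> y" using dh[of x] x by auto
      qed simp
      then show ?thesis by (simp add: h_def psiE_def)
    qed
  qed
  then show ?thesis by (simp add: h_def)
qed

lemma fan_inequality:
  fixes l \<xi> :: real assumes "0 \<le> l" "l < 1" "-1 \<le> \<xi>"
  shows "exp (l * \<xi> - psiE l * \<xi>\<^sup>2) \<le> 1 + l * \<xi>"
  using fan_inequality_ln[OF assms] one_plus_mult_pos[OF assms]
  by (metis exp_le_cancel_iff exp_ln)

lemma exp_mult_one_minus_le_one: "exp x * (1 - x) \<le> (1::real)"
proof (cases "x \<le> 1")
  case True
  then have "exp x * (1 - x) \<le> exp x * exp (- x)"
    using exp_ge_add_one_self[of "- x"] by (intro mult_left_mono) auto
  then show ?thesis by (simp add: exp_minus)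
next
  case False
  then have "exp x * (1 - x) \<le> 0" by (intro mult_nonneg_nonpos) auto
  then show ?thesis by simp
qed

lemma average_nonneg_le_one:
  fixes g :: "nat \<Rightarrow> real"
  assumes "0 < m" "\<And>j. j < m \<Longrightarrow> 0 \<le> g j \<and> g j \<le> 1"
  shows "0 \<le> 1 / real m * (\<Sum>j<m. g j) \<and> 1 / real m * (\<Sum>j<m. g j) \<le> 1"
proof -
  have "0 \<le> (\<Sum>j<m. g j)" "(\<Sum>j<m. g j) \<le> real m"
    using assms sum_bounded_above[of "{..<m}" g 1] by (auto intro: sum_nonneg)
  then show ?thesis using assms(1) by (simp add: field_simps)
qed

lemma ereal_minus_scaled_le:
  assumes "0 < k" "0 < t" "ereal s \<le> u"
  shows "ereal a - ereal k * u / ereal t \<le> ereal (a - k * s / t)"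
proof (cases u)
  case (real r)
  then have "k * s / t \<le> k * r / t"
    using assms by (intro divide_right_mono mult_left_mono) auto
  then show ?thesis using real assms by simp
qed (use assms in auto)

lemma borel_measurable_mono_ereal:
  fixes f :: "real \<Rightarrow> ereal" assumes "mono f" shows "f \<in> borel_measurable borel"
proof -
  have "is_interval (f -` {a<..})" for a
    unfolding is_interval_1 using assms by (auto dest: monoD intro: less_le_trans)
  then show ?thesis
    by (auto simp: borel_measurable_ereal_iff_Ioi intro: real_interval_borel_measurable)
qed

lemma u_bound_mono:
  assumes Q: "AE l in Q. 0 \<le> l \<and> l < 1" shows "mono (u_bound Q \<delta>T)"
proof (rule monoI)
  fix V1 V2 :: real assume "V1 \<le> V2"
  have "(\<integral>\<^sup>+ l. exp (l * S - psiE l * V2) \<partial>Q) \<le> (\<integral>\<^sup>+ l. exp (l * S - psiE l * V1) \<partial>Q)" for S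
    using Q
  proof (intro nn_integral_mono_AE, eventually_elim)
    case (elim l)
    then have "psiE l * V1 \<le> psiE l * V2"
      using psiE_nonneg \<open>V1 \<le> V2\<close> by (intro mult_left_mono) auto
    then show ?case by (intro ennreal_leI) simp
  qed
  then show "u_bound Q \<delta>T V1 \<le> u_bound Q \<delta>T V2"
    unfolding u_bound_def by (intro Sup_subset_mono) (fastforce intro: le_less_trans)
qed

lemma u_bound_measurable:
  "AE l in Q. 0 \<le> l \<and> l < 1 \<Longrightarrow> u_bound Q \<delta>T \<in> borel_measurable borel"
  by (rule borel_measurable_mono_ereal[OF u_bound_mono])

lemma u_bound_less_imp_mixture_ge:
  assumes "u_bound Q \<delta>T V < ereal S"
  shows "ennreal (1 / \<delta>T) \<le> (\<integral>\<^sup>+ l. exp (l * S - psiE l * V) \<partial>Q)"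
proof (rule ccontr)
  assume "\<not> ?thesis"
  then have "ereal S \<le> u_bound Q \<delta>T V"
    unfolding u_bound_def by (intro Sup_upper) (auto simp: not_le)
  then show False using assms by simp
qed

section \<open>Bounded integrands, independence and Ville's inequality\<close>

lemma (in finite_measure) integrable_bounded:
  fixes g :: "'a \<Rightarrow> real"
  shows "g \<in> borel_measurable M \<Longrightarrow> (\<And>x. x \<in> space M \<Longrightarrow> \<bar>g x\<bar> \<le> B) \<Longrightarrow> integrable M g"
  by (rule integrable_const_bound[where B=B]) (auto intro!: AE_I2)

lemma (in finite_measure) integrable_bounded_mult:
  fixes g h :: "'a \<Rightarrow> real"
  assumes "g \<in> borel_measurable M" "h \<in> borel_measurable M"
    and "\<And>x. x \<in> space M \<Longrightarrow> \<bar>g x\<bar> \<le> A" "\<And>x. x \<in> space M \<Longrightarrow> \<bar>h x\<bar> \<le> B"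
  shows "integrable M (\<lambda>x. g x * h x)"
proof (rule integrable_bounded[where B="A * B"])
  show "\<bar>g x * h x\<bar> \<le> A * B" if "x \<in> space M" for x
    unfolding abs_mult using assms(3,4)[OF that] by (intro mult_mono) auto
qed (use assms in auto)

lemma (in prob_space) integral_average:
  fixes g :: "nat \<Rightarrow> 'a \<Rightarrow> real"
  assumes "0 < m" "\<And>j. j < m \<Longrightarrow> integrable M (g j)" "\<And>j. j < m \<Longrightarrow> (\<integral>\<omega>. g j \<omega> \<partial>M) = c"
  shows "(\<integral>\<omega>. 1 / real m * (\<Sum>j<m. g j \<omega>) \<partial>M) = c"
  using assms by (simp add: Bochner_Integration.integral_sum)

lemma (in prob_space) integral_mult_indep_subalgebras:
  fixes X Y :: "'a \<Rightarrow> real"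
  assumes indep: "indep_set (sets A) (sets B)" and A: "subalgebra M A" and B: "subalgebra M B"
    and X: "X \<in> borel_measurable A" and Y: "Y \<in> borel_measurable B"
    and "integrable M X" "integrable M Y"
  shows "(\<integral>\<omega>. X \<omega> * Y \<omega> \<partial>M) = (\<integral>\<omega>. X \<omega> \<partial>M) * (\<integral>\<omega>. Y \<omega> \<partial>M)"
proof -
  have generated_sub: "sigma_sets (space M) {Z -` S \<inter> space M | S. S \<in> sets borel} \<subseteq> sets K"
    if K: "subalgebra M K" and Z: "Z \<in> borel_measurable K" for K and Z :: "'a \<Rightarrow> real"
  proof -
    have "{Z -` S \<inter> space M | S. S \<in> sets borel} \<subseteq> sets K"
      using measurable_sets[OF Z] K by (auto simp: subalgebra_def)
    then show ?thesis using sets.sigma_sets_subset[of _ K] K by (auto simp: subalgebra_def)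
  qed
  have "indep_var borel X borel Y"
    unfolding indep_var_eq
  proof
    show "random_variable borel X \<and> random_variable borel Y"
      using measurable_from_subalg[OF A X] measurable_from_subalg[OF B Y] by simp
    show "indep_set (sigma_sets (space M) {X -` S \<inter> space M | S. S \<in> sets borel})
                    (sigma_sets (space M) {Y -` S \<inter> space M | S. S \<in> sets borel})"
      using indep unfolding indep_set_def
      by (rule indep_sets_mono_sets) (use generated_sub[OF A X] generated_sub[OF B Y] in \<open>auto split: bool.split\<close>)
  qed
  then show ?thesis using assms(6,7) by (rule indep_var_lebesgue_integral)
qed

lemma (in prob_space) supermartingale_crossing_invariant:
  fixes X :: "nat \<Rightarrow> 'a \<Rightarrow> ennreal" and F :: "nat \<Rightarrow> 'a measure" and c :: ennreal
  assumes sub: "\<And>t. subalgebra M (F t)" and mono: "\<And>s t. s \<le> t \<Longrightarrow> subalgebra (F t) (F s)"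
    and adapted: "\<And>t. X t \<in> borel_measurable (F t)"
    and start: "(\<integral>\<^sup>+\<omega>. X 0 \<omega> \<partial>M) \<le> 1"
    and super: "\<And>t B. B \<in> sets (F t) \<Longrightarrow>
      (\<integral>\<^sup>+\<omega>. X (Suc t) \<omega> * indicator B \<omega> \<partial>M) \<le> (\<integral>\<^sup>+\<omega>. X t \<omega> * indicator B \<omega> \<partial>M)"
  shows "c * emeasure M {\<omega> \<in> space M. \<exists>r<T. c \<le> X r \<omega>}
      + (\<integral>\<^sup>+\<omega>. X T \<omega> * indicator {\<omega> \<in> space M. \<forall>r<T. X r \<omega> < c} \<omega> \<partial>M) \<le> 1"
proof -
  define B where "B T = {\<omega> \<in> space M. \<forall>r<T. X r \<omega> < c}" for T
  have B_sets: "B (Suc T) \<in> sets (F T)" for T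
  proof -
    have [measurable]: "X r \<in> borel_measurable (F T)" if "r \<in> {..T}" for r
      using measurable_from_subalg[OF mono adapted] that by simp
    have "Measurable.pred (F T) (\<lambda>\<omega>. \<forall>r\<in>{..T}. X r \<omega> < c)" by measurable
    moreover have "space (F T) = space M" using sub[of T] by (simp add: subalgebra_def)
    moreover have "B (Suc T) = {\<omega> \<in> space M. \<forall>r\<in>{..T}. X r \<omega> < c}"
      by (auto simp: B_def less_Suc_eq_le)
    ultimately show ?thesis unfolding pred_def by simp
  qed
  have B_M: "B T \<in> sets M" for T
  proof (cases T)
    case (Suc T')
    then show ?thesis using B_sets[of T'] sub[of T'] by (auto simp: subalgebra_def)
  qed (simp add: B_def)
  have X_M: "X t \<in> borel_measurable M" for t
    using measurable_from_subalg[OF sub adapted] .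
  have "c * emeasure M (space M - B T) + (\<integral>\<^sup>+\<omega>. X T \<omega> * indicator (B T) \<omega> \<partial>M) \<le> 1"
  proof (induction T)
    case 0
    then show ?case using start by (simp add: B_def)
  next
    case (Suc T)
    define D where "D = B T - B (Suc T)"
    have D_M: "D \<in> sets M" using B_M by (simp add: D_def)
    have split_B: "B T = B (Suc T) \<union> D" "B (Suc T) \<inter> D = {}"
      by (auto simp: D_def B_def)
    have "c * emeasure M D = (\<integral>\<^sup>+\<omega>. c * indicator D \<omega> \<partial>M)"
      using D_M by (rule nn_integral_cmult_indicator[symmetric])
    also have "\<dots> \<le> (\<integral>\<^sup>+\<omega>. X T \<omega> * indicator D \<omega> \<partial>M)"
      by (intro nn_integral_mono) (auto simp: indicator_def D_def B_def less_Suc_eq)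
    finally have crossing: "c * emeasure M D \<le> (\<integral>\<^sup>+\<omega>. X T \<omega> * indicator D \<omega> \<partial>M)" .
    have "(\<integral>\<^sup>+\<omega>. X T \<omega> * indicator (B T) \<omega> \<partial>M)
        = (\<integral>\<^sup>+\<omega>. X T \<omega> * indicator (B (Suc T)) \<omega> \<partial>M) + (\<integral>\<^sup>+\<omega>. X T \<omega> * indicator D \<omega> \<partial>M)"
      unfolding split_B(1) using split_B(2) X_M B_M D_M
      by (subst nn_integral_add[symmetric]) (auto intro!: nn_integral_cong simp: indicator_def)
    moreover have "emeasure M (space M - B (Suc T)) = emeasure M (space M - B T) + emeasure M D"
    proof -
      have "space M - B (Suc T) = (space M - B T) \<union> D" "(space M - B T) \<inter> D = {}"
        by (auto simp: D_def B_def)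
      then show ?thesis using B_M D_M by (simp add: plus_emeasure)
    qed
    ultimately have "c * emeasure M (space M - B (Suc T)) + (\<integral>\<^sup>+\<omega>. X T \<omega> * indicator (B (Suc T)) \<omega> \<partial>M)
        \<le> c * emeasure M (space M - B T) + (\<integral>\<^sup>+\<omega>. X T \<omega> * indicator (B T) \<omega> \<partial>M)"
      using crossing by (simp add: distrib_left add.assoc add_left_mono add.commute)
    moreover have "(\<integral>\<^sup>+\<omega>. X (Suc T) \<omega> * indicator (B (Suc T)) \<omega> \<partial>M)
        \<le> (\<integral>\<^sup>+\<omega>. X T \<omega> * indicator (B (Suc T)) \<omega> \<partial>M)"
      by (rule super[OF B_sets])
    ultimately show ?case using Suc.IH by (meson add_left_mono order_trans)
  qed
  moreover have "space M - B T = {\<omega> \<in> space M. \<exists>r<T. c \<le> X r \<omega>}"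
    by (auto simp: B_def not_less)
  ultimately show ?thesis by (simp add: B_def)
qed

lemma (in prob_space) ville_inequality:
  fixes X :: "nat \<Rightarrow> 'a \<Rightarrow> ennreal" and F :: "nat \<Rightarrow> 'a measure" and c :: ennreal
  assumes sub: "\<And>t. subalgebra M (F t)" and mono: "\<And>s t. s \<le> t \<Longrightarrow> subalgebra (F t) (F s)"
    and adapted: "\<And>t. X t \<in> borel_measurable (F t)"
    and start: "(\<integral>\<^sup>+\<omega>. X 0 \<omega> \<partial>M) \<le> 1"
    and super: "\<And>t B. B \<in> sets (F t) \<Longrightarrow>
      (\<integral>\<^sup>+\<omega>. X (Suc t) \<omega> * indicator B \<omega> \<partial>M) \<le> (\<integral>\<^sup>+\<omega>. X t \<omega> * indicator B \<omega> \<partial>M)"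
  shows "c * emeasure M {\<omega> \<in> space M. \<exists>t. c \<le> X t \<omega>} \<le> 1"
proof -
  define A where "A T = {\<omega> \<in> space M. \<exists>r<T. c \<le> X r \<omega>}" for T
  have [measurable]: "X t \<in> borel_measurable M" for t
    using measurable_from_subalg[OF sub adapted] .
  have A_M: "A T \<in> events" for T
    unfolding A_def by measurable
  have "incseq A"
    by (auto simp: incseq_def A_def) (meson order_less_le_trans)
  then have "c * emeasure M (\<Union>T. A T) = (SUP T. c * emeasure M (A T))"
    using A_M by (simp add: SUP_emeasure_incseq[symmetric] SUP_mult_left_ennreal image_subset_iff)
  also have "\<dots> \<le> 1"
  proof (rule SUP_least)
    fix T
    have "c * emeasure M (A T)
        + (\<integral>\<^sup>+\<omega>. X T \<omega> * indicator {\<omega> \<in> space M. \<forall>r<T. X r \<omega> < c} \<omega> \<partial>M) \<le> 1"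
      unfolding A_def by (rule supermartingale_crossing_invariant[where F=F]) (fact assms)+
    then show "c * emeasure M (A T) \<le> 1"
      by (rule order_trans[rotated]) (rule add_increasing2[OF zero_le order_refl])
  qed
  moreover have "(\<Union>T. A T) = {\<omega> \<in> space M. \<exists>t. c \<le> X t \<omega>}"
    by (auto simp: A_def)
  ultimately show ?thesis by simp
qed

section \<open>A time-uniform empirical Bernstein bound\<close>

text \<open>The assumption martingale_difference is the integral form of E[Z (Suc t) | F t] = \<mu> (Suc t).\<close>
locale empirical_bernstein_process = prob_space M
  for M :: "'a measure" +
  fixes F :: "nat \<Rightarrow> 'a measure" and Z Zhat :: "nat \<Rightarrow> 'a \<Rightarrow> real" and \<mu> :: "nat \<Rightarrow> real"
    and Q :: "real measure"
  assumes subalgebra_F: "\<And>t. subalgebra M (F t)"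
    and F_mono: "\<And>s t. s \<le> t \<Longrightarrow> subalgebra (F t) (F s)"
    and Z_adapted: "\<And>t. Z (Suc t) \<in> borel_measurable (F (Suc t))"
    and Z_range: "\<And>t \<omega>. \<omega> \<in> space M \<Longrightarrow> 0 \<le> Z (Suc t) \<omega> \<and> Z (Suc t) \<omega> \<le> 1"
    and \<mu>_range: "\<And>t. 0 \<le> \<mu> (Suc t) \<and> \<mu> (Suc t) \<le> 1"
    and Zhat_adapted: "\<And>t. Zhat t \<in> borel_measurable (F t)"
    and Zhat_range: "\<And>t \<omega>. \<omega> \<in> space M \<Longrightarrow> 0 \<le> Zhat t \<omega> \<and> Zhat t \<omega> \<le> 1"
    and martingale_difference: "\<And>t W K. W \<in> borel_measurable (F t) \<Longrightarrow>
      (\<And>\<omega>. \<omega> \<in> space M \<Longrightarrow> \<bar>W \<omega>\<bar> \<le> K) \<Longrightarrow> (\<integral>\<omega>. W \<omega> * (Z (Suc t) \<omega> - \<mu> (Suc t)) \<partial>M) = 0"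
    and Q: "prob_space Q" "sets Q = sets borel" "AE l in Q. 0 \<le> l \<and> l < 1"
begin

definition centered_sum :: "nat \<Rightarrow> 'a \<Rightarrow> real" where
  "centered_sum t \<omega> = (\<Sum>s\<in>{1..t}. Z s \<omega> - \<mu> s)"

definition variance_proxy :: "nat \<Rightarrow> 'a \<Rightarrow> real" where
  "variance_proxy t \<omega> = (\<Sum>s\<in>{1..t}. (Z s \<omega> - Zhat (s - 1) \<omega>)\<^sup>2)"

definition exp_process :: "real \<Rightarrow> nat \<Rightarrow> 'a \<Rightarrow> real" where
  "exp_process l t \<omega> = exp (l * centered_sum t \<omega> - psiE l * variance_proxy t \<omega>)"

definition mixture :: "nat \<Rightarrow> 'a \<Rightarrow> ennreal" where
  "mixture t \<omega> = (\<integral>\<^sup>+ l. ennreal (exp_process l t \<omega>) \<partial>Q)"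

lemma measurable_F_imp_measurable: "f \<in> measurable (F t) K \<Longrightarrow> f \<in> measurable M K"
  by (rule measurable_from_subalg[OF subalgebra_F])

lemma Z_measurable: "1 \<le> s \<Longrightarrow> s \<le> t \<Longrightarrow> Z s \<in> borel_measurable (F t)"
  using measurable_from_subalg[OF F_mono Z_adapted[of "s - 1"]] by simp

lemma centered_sum_measurable: "centered_sum t \<in> borel_measurable (F t)"
  unfolding centered_sum_def[abs_def]
  by (intro borel_measurable_sum borel_measurable_diff borel_measurable_const Z_measurable) auto

lemma variance_proxy_measurable: "variance_proxy t \<in> borel_measurable (F t)"
  unfolding variance_proxy_def[abs_def]
  by (intro borel_measurable_sum borel_measurable_power borel_measurable_diff Z_measurable
      measurable_from_subalg[OF F_mono Zhat_adapted]) auto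

lemma centered_sum_Suc: "centered_sum (Suc t) \<omega> = centered_sum t \<omega> + (Z (Suc t) \<omega> - \<mu> (Suc t))"
  unfolding centered_sum_def by simp

lemma variance_proxy_Suc: "variance_proxy (Suc t) \<omega> = variance_proxy t \<omega> + (Z (Suc t) \<omega> - Zhat t \<omega>)\<^sup>2"
  unfolding variance_proxy_def by simp

lemma abs_centered_sum_le: "\<omega> \<in> space M \<Longrightarrow> \<bar>centered_sum t \<omega>\<bar> \<le> real t"
proof -
  assume \<omega>: "\<omega> \<in> space M"
  have "\<bar>centered_sum t \<omega>\<bar> \<le> (\<Sum>s\<in>{1..t}. \<bar>Z s \<omega> - \<mu> s\<bar>)"
    unfolding centered_sum_def by (rule sum_abs)
  also have "\<dots> \<le> (\<Sum>s\<in>{1..t}. 1)"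
  proof (rule sum_mono)
    fix s assume "s \<in> {1..t}"
    then obtain r where "s = Suc r" by (cases s) auto
    then show "\<bar>Z s \<omega> - \<mu> s\<bar> \<le> 1" using Z_range[OF \<omega>, of r] \<mu>_range[of r] by auto
  qed
  finally show ?thesis by simp
qed

lemma exp_process_le:
  assumes "0 \<le> l" "l < 1" "\<omega> \<in> space M" shows "exp_process l t \<omega> \<le> exp (real t)"
proof -
  have "l * centered_sum t \<omega> \<le> 1 * real t"
    using abs_centered_sum_le[OF assms(3), of t] assms
    by (intro order_trans[OF mult_left_mono[OF abs_ge_self] mult_mono]) auto
  moreover have "0 \<le> psiE l * variance_proxy t \<omega>"
    using psiE_nonneg[OF assms(1,2)] by (simp add: variance_proxy_def sum_nonneg)
  ultimately show ?thesis unfolding exp_process_def by simp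
qed

text \<open>The increment of the exponent splits as l d + (l \<xi> - psiE l \<xi>^2), where the predictable
  part d compares the prediction with the conditional mean and Fan's inequality bounds the rest.\<close>
lemma exp_process_Suc_le:
  assumes l: "0 \<le> l" "l < 1" and \<omega>: "\<omega> \<in> space M"
  shows "exp_process l (Suc t) \<omega> \<le> exp_process l t \<omega> * exp (l * (Zhat t \<omega> - \<mu> (Suc t)))
      * (1 + l * (Z (Suc t) \<omega> - Zhat t \<omega>))"
proof -
  define \<xi> where "\<xi> = Z (Suc t) \<omega> - Zhat t \<omega>"
  have "exp_process l (Suc t) \<omega>
      = exp_process l t \<omega> * exp (l * (Zhat t \<omega> - \<mu> (Suc t))) * exp (l * \<xi> - psiE l * \<xi>\<^sup>2)"
    unfolding exp_process_def centered_sum_Suc variance_proxy_Suc \<xi>_def exp_add[symmetric]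
    by (simp add: algebra_simps)
  also have "\<dots> \<le> exp_process l t \<omega> * exp (l * (Zhat t \<omega> - \<mu> (Suc t))) * (1 + l * \<xi>)"
    using Z_range[OF \<omega>, of t] Zhat_range[OF \<omega>, of t]
    by (intro mult_left_mono fan_inequality[OF l]) (auto simp: \<xi>_def exp_process_def)
  finally show ?thesis by (simp add: \<xi>_def)
qed

lemma integral_weighted_increment:
  assumes W: "W \<in> borel_measurable (F t)" and W_bounded: "\<And>\<omega>. \<omega> \<in> space M \<Longrightarrow> \<bar>W \<omega>\<bar> \<le> K"
  shows "(\<integral>\<omega>. W \<omega> * (1 + l * (Z (Suc t) \<omega> - Zhat t \<omega>)) \<partial>M)
      = (\<integral>\<omega>. W \<omega> * (1 - l * (Zhat t \<omega> - \<mu> (Suc t))) \<partial>M)"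
proof -
  have measurable: "W \<in> borel_measurable M" "Z (Suc t) \<in> borel_measurable M" "Zhat t \<in> borel_measurable M"
    using measurable_F_imp_measurable[OF W] measurable_F_imp_measurable[OF Z_adapted]
      measurable_F_imp_measurable[OF Zhat_adapted] by auto
  have bounds: "\<bar>1 - l * (Zhat t \<omega> - \<mu> (Suc t))\<bar> \<le> 1 + \<bar>l\<bar>" "\<bar>Z (Suc t) \<omega> - \<mu> (Suc t)\<bar> \<le> 1"
    if "\<omega> \<in> space M" for \<omega>
  proof -
    have d: "\<bar>Zhat t \<omega> - \<mu> (Suc t)\<bar> \<le> 1" and "\<bar>Z (Suc t) \<omega> - \<mu> (Suc t)\<bar> \<le> 1"
      using Z_range[OF that, of t] Zhat_range[OF that, of t] \<mu>_range[of t] by (auto simp: abs_le_iff)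
    then show "\<bar>Z (Suc t) \<omega> - \<mu> (Suc t)\<bar> \<le> 1" by simp
    show "\<bar>1 - l * (Zhat t \<omega> - \<mu> (Suc t))\<bar> \<le> 1 + \<bar>l\<bar>"
      using abs_triangle_ineq4[of 1 "l * (Zhat t \<omega> - \<mu> (Suc t))"] mult_left_mono[OF d abs_ge_zero[of l]]
      by (simp add: abs_mult)
  qed
  have "(\<lambda>\<omega>. 1 - l * (Zhat t \<omega> - \<mu> (Suc t))) \<in> borel_measurable M"
    "(\<lambda>\<omega>. Z (Suc t) \<omega> - \<mu> (Suc t)) \<in> borel_measurable M"
    using measurable by simp_all
  then have "integrable M (\<lambda>\<omega>. W \<omega> * (1 - l * (Zhat t \<omega> - \<mu> (Suc t))))"
    "integrable M (\<lambda>\<omega>. W \<omega> * (Z (Suc t) \<omega> - \<mu> (Suc t)))"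
    using measurable(1) W_bounded bounds by (auto intro!: integrable_bounded_mult[where A=K])
  moreover have "W \<omega> * (1 + l * (Z (Suc t) \<omega> - Zhat t \<omega>))
      = W \<omega> * (1 - l * (Zhat t \<omega> - \<mu> (Suc t))) + l * (W \<omega> * (Z (Suc t) \<omega> - \<mu> (Suc t)))" for \<omega>
    by (simp add: algebra_simps)
  ultimately show ?thesis
    using martingale_difference[OF W W_bounded] by simp
qed

lemma exp_weighted_increment_le:
  assumes l: "0 \<le> l" "l < 1" and G: "G \<in> borel_measurable (F t)"
    and G_range: "\<And>\<omega>. \<omega> \<in> space M \<Longrightarrow> 0 \<le> G \<omega> \<and> G \<omega> \<le> C"
  shows "(\<integral>\<^sup>+\<omega>. ennreal (G \<omega> * exp (l * (Zhat t \<omega> - \<mu> (Suc t))) * (1 + l * (Z (Suc t) \<omega> - Zhat t \<omega>))) \<partial>M)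
      \<le> (\<integral>\<^sup>+\<omega>. ennreal (G \<omega>) \<partial>M)"
proof -
  define d where "d \<omega> = Zhat t \<omega> - \<mu> (Suc t)" for \<omega>
  define \<xi> where "\<xi> \<omega> = Z (Suc t) \<omega> - Zhat t \<omega>" for \<omega>
  define W where "W \<omega> = G \<omega> * exp (l * d \<omega>)" for \<omega>
  have [measurable]: "G \<in> borel_measurable (F t)" "Zhat t \<in> borel_measurable (F t)"
    using G Zhat_adapted by auto
  have W_F: "W \<in> borel_measurable (F t)"
    unfolding W_def d_def by measurable
  have [measurable]: "W \<in> borel_measurable M" "G \<in> borel_measurable M" "\<xi> \<in> borel_measurable M"
    "d \<in> borel_measurable M"
    using measurable_F_imp_measurable[OF W_F] measurable_F_imp_measurable[OF G]
      measurable_F_imp_measurable[OF Z_adapted] measurable_F_imp_measurable[OF Zhat_adapted]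
    by (auto simp: \<xi>_def[abs_def] d_def[abs_def])
  have abs_l_mult: "\<bar>l * x\<bar> \<le> 1" if "\<bar>x\<bar> \<le> 1" for x
    using that l by (auto simp: abs_mult intro: mult_le_one)
  have l_bounds: "\<bar>l * d \<omega>\<bar> \<le> 1" "\<bar>l * \<xi> \<omega>\<bar> \<le> 1" if "\<omega> \<in> space M" for \<omega>
  proof -
    have "\<bar>d \<omega>\<bar> \<le> 1" "\<bar>\<xi> \<omega>\<bar> \<le> 1"
      using Z_range[OF that, of t] Zhat_range[OF that, of t] \<mu>_range[of t] by (auto simp: d_def \<xi>_def abs_le_iff)
    then show "\<bar>l * d \<omega>\<bar> \<le> 1" "\<bar>l * \<xi> \<omega>\<bar> \<le> 1" by (simp_all add: abs_l_mult)
  qed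
  have W_range: "0 \<le> W \<omega> \<and> W \<omega> \<le> C * exp 1" if "\<omega> \<in> space M" for \<omega>
  proof -
    have "exp (l * d \<omega>) \<le> exp 1"
      using abs_le_D1[OF l_bounds(1)[OF that]] by simp
    then have "G \<omega> * exp (l * d \<omega>) \<le> C * exp 1"
      using G_range[OF that] by (intro mult_mono) auto
    then show ?thesis using G_range[OF that] by (simp add: W_def)
  qed
  have factor_bounds: "0 \<le> 1 + l * \<xi> \<omega>" "\<bar>1 + l * \<xi> \<omega>\<bar> \<le> 2" "\<bar>1 - l * d \<omega>\<bar> \<le> 2"
    if "\<omega> \<in> space M" for \<omega>
    using l_bounds[OF that] by (auto simp: abs_le_iff)
  have integrable: "integrable M (\<lambda>\<omega>. W \<omega> * (1 + l * \<xi> \<omega>))" "integrable M (\<lambda>\<omega>. W \<omega> * (1 - l * d \<omega>))"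
    using W_range factor_bounds by (auto intro!: integrable_bounded_mult[where A="C * exp 1" and B=2])
  have integrable_G: "integrable M G"
    using G_range by (intro integrable_bounded[where B=C]) auto
  have "(\<integral>\<omega>. W \<omega> * (1 + l * \<xi> \<omega>) \<partial>M) = (\<integral>\<omega>. W \<omega> * (1 - l * d \<omega>) \<partial>M)"
    using integral_weighted_increment[OF W_F, of "C * exp 1" l] W_range by (simp add: \<xi>_def d_def)
  also have "\<dots> \<le> (\<integral>\<omega>. G \<omega> \<partial>M)"
    using integrable(2) integrable_G
  proof (rule integral_mono)
    show "W \<omega> * (1 - l * d \<omega>) \<le> G \<omega>" if "\<omega> \<in> space M" for \<omega>
      using mult_left_mono[OF exp_mult_one_minus_le_one, of "G \<omega>" "l * d \<omega>"] G_range[OF that]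
      by (simp add: W_def mult.assoc)
  qed
  finally have "ennreal (\<integral>\<omega>. W \<omega> * (1 + l * \<xi> \<omega>) \<partial>M) \<le> ennreal (\<integral>\<omega>. G \<omega> \<partial>M)"
    by (rule ennreal_leI)
  moreover have "(\<integral>\<^sup>+\<omega>. ennreal (W \<omega> * (1 + l * \<xi> \<omega>)) \<partial>M) = ennreal (\<integral>\<omega>. W \<omega> * (1 + l * \<xi> \<omega>) \<partial>M)"
    using integrable(1) W_range factor_bounds by (intro nn_integral_eq_integral AE_I2) auto
  moreover have "(\<integral>\<^sup>+\<omega>. ennreal (G \<omega>) \<partial>M) = ennreal (\<integral>\<omega>. G \<omega> \<partial>M)"
    using integrable_G G_range by (intro nn_integral_eq_integral AE_I2) auto
  ultimately show ?thesis
    by (simp add: W_def d_def \<xi>_def)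
qed

lemma exp_process_supermartingale:
  assumes l: "0 \<le> l" "l < 1" and B: "B \<in> sets (F t)"
  shows "(\<integral>\<^sup>+\<omega>. ennreal (exp_process l (Suc t) \<omega> * indicator B \<omega>) \<partial>M)
      \<le> (\<integral>\<^sup>+\<omega>. ennreal (exp_process l t \<omega> * indicator B \<omega>) \<partial>M)"
proof -
  define G where "G \<omega> = exp_process l t \<omega> * indicator B \<omega>" for \<omega>
  have [measurable]: "centered_sum t \<in> borel_measurable (F t)" "variance_proxy t \<in> borel_measurable (F t)"
    "B \<in> sets (F t)"
    using centered_sum_measurable variance_proxy_measurable B by auto
  have G_F: "G \<in> borel_measurable (F t)"
    unfolding G_def exp_process_def by measurable
  have G_range: "0 \<le> G \<omega> \<and> G \<omega> \<le> exp (real t)" if "\<omega> \<in> space M" for \<omega>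
  proof -
    have "0 \<le> exp_process l t \<omega>" by (simp add: exp_process_def)
    then show ?thesis using exp_process_le[OF l that, of t] by (simp add: G_def indicator_def)
  qed
  have "exp_process l (Suc t) \<omega> * indicator B \<omega>
      \<le> G \<omega> * exp (l * (Zhat t \<omega> - \<mu> (Suc t))) * (1 + l * (Z (Suc t) \<omega> - Zhat t \<omega>))"
    if "\<omega> \<in> space M" for \<omega>
    using exp_process_Suc_le[OF l that] by (cases "\<omega> \<in> B") (simp_all add: G_def)
  then have "(\<integral>\<^sup>+\<omega>. ennreal (exp_process l (Suc t) \<omega> * indicator B \<omega>) \<partial>M)
      \<le> (\<integral>\<^sup>+\<omega>. ennreal (G \<omega> * exp (l * (Zhat t \<omega> - \<mu> (Suc t))) * (1 + l * (Z (Suc t) \<omega> - Zhat t \<omega>))) \<partial>M)"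
    by (intro nn_integral_mono ennreal_leI)
  also have "\<dots> \<le> (\<integral>\<^sup>+\<omega>. ennreal (G \<omega>) \<partial>M)"
    by (rule exp_weighted_increment_le[OF l G_F G_range])
  finally show ?thesis unfolding G_def .
qed

lemma exp_process_measurable:
  "(\<lambda>(\<omega>, l). exp_process l t \<omega>) \<in> borel_measurable (F t \<Otimes>\<^sub>M borel)"
proof -
  have [measurable]: "centered_sum t \<in> borel_measurable (F t)" "variance_proxy t \<in> borel_measurable (F t)"
    using centered_sum_measurable variance_proxy_measurable by auto
  show ?thesis unfolding exp_process_def by measurable
qed

lemma mixture_measurable: "mixture t \<in> borel_measurable (F t)"
proof -
  have "(\<lambda>(\<omega>, l). ennreal (exp_process l t \<omega>)) \<in> borel_measurable (F t \<Otimes>\<^sub>M Q)"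
    using exp_process_measurable by (simp add: measurable_cong_sets[OF sets_pair_measure_cong[OF refl Q(2)] refl])
  then show ?thesis
    unfolding mixture_def[abs_def]
    by (rule sigma_finite_measure.borel_measurable_nn_integral[OF prob_space_imp_sigma_finite[OF Q(1)],
          where f="\<lambda>\<omega> l. ennreal (exp_process l t \<omega>)", simplified])
qed

lemma mixture_0: "mixture 0 \<omega> = 1"
  using prob_space.emeasure_space_1[OF Q(1)]
  by (simp add: mixture_def exp_process_def centered_sum_def variance_proxy_def)

lemma mixture_supermartingale:
  assumes B: "B \<in> sets (F t)"
  shows "(\<integral>\<^sup>+\<omega>. mixture (Suc t) \<omega> * indicator B \<omega> \<partial>M) \<le> (\<integral>\<^sup>+\<omega>. mixture t \<omega> * indicator B \<omega> \<partial>M)"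
proof -
  interpret pair_sigma_finite M Q
    by (intro pair_sigma_finite.intro prob_space_imp_sigma_finite Q(1)) unfold_locales
  have B_M: "B \<in> sets M"
    using B subalgebra_F by (auto simp: subalgebra_def)
  have Tonelli: "(\<integral>\<^sup>+\<omega>. mixture s \<omega> * indicator B \<omega> \<partial>M)
      = (\<integral>\<^sup>+l. (\<integral>\<^sup>+\<omega>. ennreal (exp_process l s \<omega> * indicator B \<omega>) \<partial>M) \<partial>Q)" for s
  proof -
    have [measurable]: "centered_sum s \<in> borel_measurable M" "variance_proxy s \<in> borel_measurable M"
      using measurable_F_imp_measurable[OF centered_sum_measurable]
        measurable_F_imp_measurable[OF variance_proxy_measurable] by auto
    have "(\<lambda>(\<omega>, l). ennreal (exp_process l s \<omega> * indicator B \<omega>)) \<in> borel_measurable (M \<Otimes>\<^sub>M borel)"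
      using B_M unfolding exp_process_def by measurable
    then have "(\<lambda>(\<omega>, l). ennreal (exp_process l s \<omega> * indicator B \<omega>)) \<in> borel_measurable (M \<Otimes>\<^sub>M Q)"
      by (simp add: measurable_cong_sets[OF sets_pair_measure_cong[OF refl Q(2)] refl])
    then have "(\<integral>\<^sup>+\<omega>. (\<integral>\<^sup>+l. ennreal (exp_process l s \<omega> * indicator B \<omega>) \<partial>Q) \<partial>M)
        = (\<integral>\<^sup>+l. (\<integral>\<^sup>+\<omega>. ennreal (exp_process l s \<omega> * indicator B \<omega>) \<partial>M) \<partial>Q)"
      by (rule Fubini'[symmetric])
    moreover have "mixture s \<omega> * indicator B \<omega> = (\<integral>\<^sup>+l. ennreal (exp_process l s \<omega> * indicator B \<omega>) \<partial>Q)" for \<omega>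
      by (cases "\<omega> \<in> B") (simp_all add: mixture_def)
    ultimately show ?thesis by simp
  qed
  show ?thesis
    unfolding Tonelli
  proof (rule nn_integral_mono_AE)
    show "AE l in Q. (\<integral>\<^sup>+\<omega>. ennreal (exp_process l (Suc t) \<omega> * indicator B \<omega>) \<partial>M)
        \<le> (\<integral>\<^sup>+\<omega>. ennreal (exp_process l t \<omega> * indicator B \<omega>) \<partial>M)"
      using Q(3) by eventually_elim (auto intro: exp_process_supermartingale[OF _ _ B])
  qed
qed

lemma prob_mixture_crossing:
  assumes "0 < \<delta>"
  shows "{\<omega> \<in> space M. \<exists>t. ennreal (1 / \<delta>) \<le> mixture t \<omega>} \<in> events"
    and "prob {\<omega> \<in> space M. \<exists>t. ennreal (1 / \<delta>) \<le> mixture t \<omega>} \<le> \<delta>"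
proof -
  have [measurable]: "mixture t \<in> borel_measurable M" for t
    using measurable_F_imp_measurable[OF mixture_measurable] .
  show crossing_event: "{\<omega> \<in> space M. \<exists>t. ennreal (1 / \<delta>) \<le> mixture t \<omega>} \<in> events"
    by measurable
  have "ennreal (1 / \<delta>) * emeasure M {\<omega> \<in> space M. \<exists>t. ennreal (1 / \<delta>) \<le> mixture t \<omega>} \<le> 1"
    by (rule ville_inequality[where F=F])
      (simp_all add: subalgebra_F F_mono mixture_measurable mixture_supermartingale mixture_0 emeasure_space_1)
  then have "1 / \<delta> * prob {\<omega> \<in> space M. \<exists>t. ennreal (1 / \<delta>) \<le> mixture t \<omega>} \<le> 1"
    using assms by (simp add: emeasure_eq_measure ennreal_mult'[symmetric] ennreal_le_1)
  then show "prob {\<omega> \<in> space M. \<exists>t. ennreal (1 / \<delta>) \<le> mixture t \<omega>} \<le> \<delta>"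
    using assms by (simp add: field_simps)
qed

theorem confidence_sequence:
  assumes "0 < \<delta>"
  shows "{\<omega> \<in> space M. \<exists>t. u_bound Q \<delta> (variance_proxy t \<omega>) < ereal (centered_sum t \<omega>)} \<in> events"
    and "prob {\<omega> \<in> space M. \<exists>t. u_bound Q \<delta> (variance_proxy t \<omega>) < ereal (centered_sum t \<omega>)} \<le> \<delta>"
proof -
  have [measurable]: "u_bound Q \<delta> \<in> borel_measurable borel"
    using u_bound_measurable[OF Q(3)] .
  have [measurable]: "variance_proxy t \<in> borel_measurable M" "centered_sum t \<in> borel_measurable M" for t
    using measurable_F_imp_measurable[OF variance_proxy_measurable]
      measurable_F_imp_measurable[OF centered_sum_measurable] by auto
  show "{\<omega> \<in> space M. \<exists>t. u_bound Q \<delta> (variance_proxy t \<omega>) < ereal (centered_sum t \<omega>)} \<in> events"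
    by measurable
  moreover have "{\<omega> \<in> space M. \<exists>t. u_bound Q \<delta> (variance_proxy t \<omega>) < ereal (centered_sum t \<omega>)}
      \<subseteq> {\<omega> \<in> space M. \<exists>t. ennreal (1 / \<delta>) \<le> mixture t \<omega>}"
    by (auto simp: mixture_def exp_process_def dest: u_bound_less_imp_mixture_ge)
  ultimately show "prob {\<omega> \<in> space M. \<exists>t. u_bound Q \<delta> (variance_proxy t \<omega>) < ereal (centered_sum t \<omega>)} \<le> \<delta>"
    using prob_mixture_crossing[OF assms] by (auto intro: order_trans[OF finite_measure_mono])
qed

end

locale independent_samples = prob_space M
  for M :: "'a measure" +
  fixes Xl Xu :: "nat \<Rightarrow> nat \<Rightarrow> 'a \<Rightarrow> real^'d" and Yl :: "nat \<Rightarrow> nat \<Rightarrow> 'a \<Rightarrow> 'y"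
    and n N :: "nat \<Rightarrow> nat"
  assumes Xl_meas: "\<And>t i. (\<lambda>\<omega>. (Xl t i \<omega>, Yl t i \<omega>)) \<in> measurable M (borel \<Otimes>\<^sub>M count_space UNIV)"
    and Xu_meas: "\<And>t j. Xu t j \<in> measurable M borel"
    and indep: "indep_sets (sample_sets M Xl Yl Xu) (sample_index n N)"
begin

abbreviation data :: "nat set \<Rightarrow> 'a measure" where
  "data T \<equiv> data_sigma M Xl Yl Xu n N T"

definition data_generator :: "nat set \<Rightarrow> 'a set set" where
  "data_generator T = \<Union> {sample_sets M Xl Yl Xu k | k. k \<in> sample_index n N \<and> sidx_time k \<in> T}"

lemma sample_sets_subset: "sample_sets M Xl Yl Xu k \<subseteq> events"
proof (cases k)
  case (Lab t i)
  then show ?thesis using measurable_sets[OF Xl_meas[of t i]] by (auto simp: sample_sets_def)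
next
  case (Unl t j)
  then show ?thesis using measurable_sets[OF Xu_meas[of t j]] by (auto simp: sample_sets_def)
qed

lemma data_generator_subset: "data_generator T \<subseteq> events"
  using sample_sets_subset unfolding data_generator_def by blast

lemma sets_data: "sets (data T) = sigma_sets (space M) (data_generator T)"
  unfolding data_sigma_def data_generator_def[symmetric]
  using data_generator_subset sets.sets_into_space by (subst sets_measure_of) blast+

lemma space_data: "space (data T) = space M"
  unfolding data_sigma_def by (simp add: space_measure_of_conv)

lemma subalgebra_data: "subalgebra M (data T)"
  unfolding subalgebra_def space_data sets_data
  using data_generator_subset by (simp add: sets.sigma_sets_subset)

lemma data_mono: "T1 \<subseteq> T2 \<Longrightarrow> subalgebra (data T2) (data T1)"
  unfolding subalgebra_def space_data sets_data
  by (intro conjI refl sigma_sets_mono') (auto simp: data_generator_def)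

lemma measurable_data_imp_measurable: "g \<in> measurable (data T) K \<Longrightarrow> g \<in> measurable M K"
  by (rule measurable_from_subalg[OF subalgebra_data])

lemma labeled_sample_measurable:
  assumes "s \<in> T" "i < n s"
  shows "(\<lambda>\<omega>. (Xl s i \<omega>, Yl s i \<omega>)) \<in> measurable (data T) (borel \<Otimes>\<^sub>M count_space UNIV)"
proof (rule measurableI)
  fix A :: "((real^'d) \<times> 'y) set" assume "A \<in> sets (borel \<Otimes>\<^sub>M count_space UNIV)"
  then have "(\<lambda>\<omega>. (Xl s i \<omega>, Yl s i \<omega>)) -` A \<inter> space M \<in> sample_sets M Xl Yl Xu (Lab s i)"
    unfolding sample_sets_def by auto
  moreover have "Lab s i \<in> sample_index n N" "sidx_time (Lab s i) \<in> T"
    using assms by (auto simp: sample_index_def)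
  ultimately have "(\<lambda>\<omega>. (Xl s i \<omega>, Yl s i \<omega>)) -` A \<inter> space M \<in> data_generator T"
    unfolding data_generator_def by blast
  then show "(\<lambda>\<omega>. (Xl s i \<omega>, Yl s i \<omega>)) -` A \<inter> space (data T) \<in> sets (data T)"
    unfolding space_data sets_data by (rule sigma_sets.Basic)
qed (simp add: space_pair_measure)

lemma unlabeled_sample_measurable:
  assumes "s \<in> T" "j < N s"
  shows "Xu s j \<in> borel_measurable (data T)"
proof (rule measurableI)
  fix A :: "(real^'d) set" assume "A \<in> sets borel"
  then have "Xu s j -` A \<inter> space M \<in> sample_sets M Xl Yl Xu (Unl s j)"
    unfolding sample_sets_def by auto
  moreover have "Unl s j \<in> sample_index n N" "sidx_time (Unl s j) \<in> T"
    using assms by (auto simp: sample_index_def)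
  ultimately have "Xu s j -` A \<inter> space M \<in> data_generator T"
    unfolding data_generator_def by blast
  then show "Xu s j -` A \<inter> space (data T) \<in> sets (data T)"
    unfolding space_data sets_data by (rule sigma_sets.Basic)
qed simp

lemma Int_stable_sample_sets: "Int_stable (sample_sets M Xl Yl Xu k)"
proof (cases k)
  case (Lab t i)
  show ?thesis unfolding Int_stable_def
  proof (intro ballI)
    fix a b assume "a \<in> sample_sets M Xl Yl Xu k" "b \<in> sample_sets M Xl Yl Xu k"
    then obtain A B where "a = (\<lambda>\<omega>. (Xl t i \<omega>, Yl t i \<omega>)) -` A \<inter> space M" "A \<in> sets (borel \<Otimes>\<^sub>M count_space UNIV)"
      "b = (\<lambda>\<omega>. (Xl t i \<omega>, Yl t i \<omega>)) -` B \<inter> space M" "B \<in> sets (borel \<Otimes>\<^sub>M count_space UNIV)"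
      unfolding sample_sets_def Lab by auto
    then show "a \<inter> b \<in> sample_sets M Xl Yl Xu k"
      unfolding sample_sets_def Lab by (auto intro!: exI[of _ "A \<inter> B"])
  qed
next
  case (Unl t j)
  show ?thesis unfolding Int_stable_def
  proof (intro ballI)
    fix a b assume "a \<in> sample_sets M Xl Yl Xu k" "b \<in> sample_sets M Xl Yl Xu k"
    then obtain A B where "a = Xu t j -` A \<inter> space M" "A \<in> sets borel"
      "b = Xu t j -` B \<inter> space M" "B \<in> sets borel"
      unfolding sample_sets_def Unl by auto
    then show "a \<inter> b \<in> sample_sets M Xl Yl Xu k"
      unfolding sample_sets_def Unl by (auto intro!: exI[of _ "A \<inter> B"])
  qed
qed

lemma indep_data:
  assumes "T1 \<inter> T2 = {}"
  shows "indep_set (sets (data T1)) (sets (data T2))"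
proof -
  define I where "I b = {k \<in> sample_index n N. sidx_time k \<in> (if b then T1 else T2)}" for b
  have "indep_sets (sample_sets M Xl Yl Xu) (\<Union>b. I b)"
    by (rule indep_sets_mono_index[OF _ indep]) (auto simp: I_def)
  then have "indep_sets (\<lambda>b. sigma_sets (space M) (\<Union>k\<in>I b. sample_sets M Xl Yl Xu k)) UNIV"
    using assms by (intro indep_sets_collect_sigma) (auto simp: Int_stable_sample_sets disjoint_family_on_def I_def)
  moreover have "sigma_sets (space M) (\<Union>k\<in>I b. sample_sets M Xl Yl Xu k) = case_bool (sets (data T1)) (sets (data T2)) b" for b
    by (cases b) (auto simp: sets_data data_generator_def I_def intro!: arg_cong[where f="sigma_sets (space M)"])
  ultimately show ?thesis unfolding indep_set_def by simp
qed

lemma integral_mult_indep_mean_zero: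
  fixes X Y :: "'a \<Rightarrow> real"
  assumes "T1 \<inter> T2 = {}" and X: "X \<in> borel_measurable (data T1)" and Y: "Y \<in> borel_measurable (data T2)"
    and X_bounded: "\<And>\<omega>. \<omega> \<in> space M \<Longrightarrow> \<bar>X \<omega>\<bar> \<le> A"
    and Y_bounded: "\<And>\<omega>. \<omega> \<in> space M \<Longrightarrow> \<bar>Y \<omega>\<bar> \<le> B"
    and "(\<integral>\<omega>. Y \<omega> \<partial>M) = 0"
  shows "(\<integral>\<omega>. X \<omega> * Y \<omega> \<partial>M) = 0"
  using integral_mult_indep_subalgebras[OF indep_data[OF assms(1)] subalgebra_data subalgebra_data X Y
      integrable_bounded[OF measurable_data_imp_measurable[OF X] X_bounded]
      integrable_bounded[OF measurable_data_imp_measurable[OF Y] Y_bounded]] assms(6)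
  by simp


end

section \<open>Prediction-powered risk monitoring\<close>

lemma synth_label_measurable:
  fixes fp :: "real^'d \<Rightarrow> 'y::finite \<Rightarrow> real"
  assumes fp_meas: "\<And>c. (\<lambda>x. fp x c) \<in> borel_measurable borel"
  shows "synth_label fp \<in> measurable borel (count_space UNIV)"
proof -
  define pick :: "'y set \<Rightarrow> 'y" where "pick S = (SOME c. c \<in> S)" for S
  define maximizers where "maximizers x = {c. \<forall>c'. fp x c' \<le> fp x c}" for x
  have synth_label_eq: "synth_label fp x = pick (maximizers x)" for x
    unfolding synth_label_def arg_max_on_def arg_max_def is_arg_max_def pick_def maximizers_def
    by (simp add: not_less)
  txt \<open>The set of maximizers ranges over finitely many sets, each a Borel event.\<close>
  have preimage: "synth_label fp -` {c} =
      {x. \<exists>S\<in>{S. pick S = c}. \<forall>c0\<in>UNIV. (c0 \<in> S \<longleftrightarrow> (\<forall>c'\<in>UNIV. fp x c' \<le> fp x c0))}" for c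
  proof (intro set_eqI iffI)
    fix x assume "x \<in> synth_label fp -` {c}"
    then show "x \<in> {x. \<exists>S\<in>{S. pick S = c}. \<forall>c0\<in>UNIV. (c0 \<in> S \<longleftrightarrow> (\<forall>c'\<in>UNIV. fp x c' \<le> fp x c0))}"
      by (auto simp: synth_label_eq maximizers_def intro!: bexI[of _ "maximizers x"])
  next
    fix x assume "x \<in> {x. \<exists>S\<in>{S. pick S = c}. \<forall>c0\<in>UNIV. (c0 \<in> S \<longleftrightarrow> (\<forall>c'\<in>UNIV. fp x c' \<le> fp x c0))}"
    then obtain S where S: "pick S = c" "\<And>c0. c0 \<in> S \<longleftrightarrow> (\<forall>c'. fp x c' \<le> fp x c0)" by auto
    then have "S = maximizers x" by (auto simp: maximizers_def)
    then show "x \<in> synth_label fp -` {c}" using S by (simp add: synth_label_eq)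
  qed
  have [measurable]: "\<And>c. (\<lambda>x. fp x c) \<in> borel_measurable borel"
    by (rule fp_meas)
  have "Measurable.pred borel (\<lambda>x. \<exists>S\<in>{S. pick S = c}. \<forall>c0\<in>UNIV. (c0 \<in> S \<longleftrightarrow> (\<forall>c'\<in>UNIV. fp x c' \<le> fp x c0)))"
    for c by measurable
  then show ?thesis
    by (subst measurable_count_space_eq2) (auto simp: preimage pred_def)
qed

locale pprm = independent_samples M Xl Xu Yl n N
  for M :: "'a measure"
    and Xl Xu :: "nat \<Rightarrow> nat \<Rightarrow> 'a \<Rightarrow> real^('d::finite)" and Yl :: "nat \<Rightarrow> nat \<Rightarrow> 'a \<Rightarrow> 'y::finite"
    and n N :: "nat \<Rightarrow> nat" +
  fixes P :: "nat \<Rightarrow> ((real^'d) \<times> 'y) measure"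
    and f :: "real^'d \<Rightarrow> 'o" and loss :: "'o \<Rightarrow> 'y \<Rightarrow> real"
    and fp :: "real^'d \<Rightarrow> 'y \<Rightarrow> real"
    and \<eta> :: "nat \<Rightarrow> 'a \<Rightarrow> real" and \<eta>max :: real
    and z0 :: real and Q :: "real measure"
    and \<delta>S \<delta>T \<epsilon>tol :: real
    and U0 :: "'a \<Rightarrow> real"
    and R :: "nat \<Rightarrow> real" and Rpp Z Zbar V :: "nat \<Rightarrow> 'a \<Rightarrow> real" and L :: "nat \<Rightarrow> 'a \<Rightarrow> ereal"
  assumes P: "\<And>t. prob_space (P t)" "\<And>t. sets (P t) = sets (borel \<Otimes>\<^sub>M count_space UNIV)"
    and loss_range: "\<And>out y. 0 \<le> loss out y \<and> loss out y \<le> 1"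
    and loss_meas: "\<And>y. (\<lambda>x. loss (f x) y) \<in> borel_measurable borel"
    and fp_meas: "\<And>c. (\<lambda>x. fp x c) \<in> borel_measurable borel"
    and sizes: "\<And>t. t \<ge> 1 \<Longrightarrow> n t \<ge> 1 \<and> N t \<ge> 1"
    and lab_distr: "\<And>t i. i < n t \<Longrightarrow>
          distr M (borel \<Otimes>\<^sub>M count_space UNIV) (\<lambda>\<omega>. (Xl t i \<omega>, Yl t i \<omega>)) = P t"
    and unl_distr: "\<And>t j. j < N t \<Longrightarrow> distr M borel (Xu t j) = distr (P t) borel fst"
    and \<eta>max: "\<eta>max > 0"
    and \<eta>_range: "\<And>t \<omega>. t \<ge> 1 \<Longrightarrow> \<omega> \<in> space M \<Longrightarrow> 0 \<le> \<eta> t \<omega> \<and> \<eta> t \<omega> \<le> \<eta>max"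
    and \<eta>_pred: "\<And>t. t \<ge> 1 \<Longrightarrow> \<eta> t \<in> borel_measurable (data {1..<t})"
    and z0: "0 \<le> z0" "z0 \<le> 1"
    and \<delta>T: "0 < \<delta>T"
    and Q: "prob_space Q" "sets Q = sets borel" "AE l in Q. 0 \<le> l \<and> l < 1"
    and U0_meas: "U0 \<in> borel_measurable (data {0})"
    and R_def: "\<And>t. R t = (\<integral>z. loss (f (fst z)) (snd z) \<partial>P t)"
    and U0_cover: "prob {\<omega> \<in> space M. R 0 \<le> U0 \<omega>} \<ge> 1 - \<delta>S"
    and H0: "\<And>t. t \<ge> 1 \<Longrightarrow> (1 / real t) * (\<Sum>t'\<in>{1..t}. R t') \<le> R 0 + \<epsilon>tol"
    and Rpp_def: "\<And>t \<omega>. Rpp t \<omega> =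
          \<eta> t \<omega> / real (N t) * (\<Sum>j<N t. loss (f (Xu t j \<omega>)) (synth_label fp (Xu t j \<omega>)))
        + 1 / real (n t) * (\<Sum>i<n t. loss (f (Xl t i \<omega>)) (Yl t i \<omega>))
        - \<eta> t \<omega> / real (n t) * (\<Sum>i<n t. loss (f (Xl t i \<omega>)) (synth_label fp (Xl t i \<omega>)))"
    and Z_def: "\<And>t \<omega>. Z t \<omega> = (Rpp t \<omega> + \<eta>max) / (1 + 2 * \<eta>max)"
    and Zbar_def: "\<And>t \<omega>. Zbar t \<omega> = (if t = 0 then z0 else (1 / real t) * (\<Sum>t'\<in>{1..t}. Z t' \<omega>))"
    and V_def: "\<And>t \<omega>. V t \<omega> = (\<Sum>t'\<in>{1..t}. (Z t' \<omega> - Zbar (t' - 1) \<omega>)\<^sup>2)"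
    and L_def: "\<And>t \<omega>. L t \<omega> =
          ereal ((1 / real t) * (\<Sum>t'\<in>{1..t}. Rpp t' \<omega>))
          - ereal (1 + 2 * \<eta>max) * u_bound Q \<delta>T (V t \<omega>) / ereal (real t)"
begin

definition unlabeled_synth_loss :: "nat \<Rightarrow> 'a \<Rightarrow> real" where
  "unlabeled_synth_loss t \<omega> = 1 / real (N t) * (\<Sum>j<N t. loss (f (Xu t j \<omega>)) (synth_label fp (Xu t j \<omega>)))"

definition labeled_loss :: "nat \<Rightarrow> 'a \<Rightarrow> real" where
  "labeled_loss t \<omega> = 1 / real (n t) * (\<Sum>i<n t. loss (f (Xl t i \<omega>)) (Yl t i \<omega>))"

definition labeled_synth_loss :: "nat \<Rightarrow> 'a \<Rightarrow> real" where
  "labeled_synth_loss t \<omega> = 1 / real (n t) * (\<Sum>i<n t. loss (f (Xl t i \<omega>)) (synth_label fp (Xl t i \<omega>)))"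

definition synth_risk :: "nat \<Rightarrow> real" where
  "synth_risk t = (\<integral>z. loss (f (fst z)) (synth_label fp (fst z)) \<partial>P t)"

definition scaled_risk :: "nat \<Rightarrow> real" where
  "scaled_risk t = (R t + \<eta>max) / (1 + 2 * \<eta>max)"

lemma Rpp_eq: "Rpp t \<omega> = labeled_loss t \<omega> + \<eta> t \<omega> * (unlabeled_synth_loss t \<omega> - labeled_synth_loss t \<omega>)"
  unfolding Rpp_def labeled_loss_def unlabeled_synth_loss_def labeled_synth_loss_def by (simp add: algebra_simps)

lemma scale_pos: "0 < 1 + 2 * \<eta>max"
  using \<eta>max by simp

lemma synth_loss_measurable: "(\<lambda>x. loss (f x) (synth_label fp x)) \<in> borel_measurable borel"
  by (rule measurable_compose_countable'[where I=UNIV, OF loss_meas synth_label_measurable[OF fp_meas]])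
     (auto intro: countable_finite)

lemma loss_measurable: "(\<lambda>z. loss (f (fst z)) (snd z)) \<in> borel_measurable (borel \<Otimes>\<^sub>M count_space UNIV)"
  by (rule measurable_compose_countable'[where I=UNIV and g=snd and f="\<lambda>y z. loss (f (fst z)) y"])
     (auto intro: countable_finite measurable_compose[OF measurable_fst loss_meas])

lemma
  assumes "t \<in> T"
  shows unlabeled_synth_loss_measurable: "unlabeled_synth_loss t \<in> borel_measurable (data T)"
    and labeled_loss_measurable: "labeled_loss t \<in> borel_measurable (data T)"
    and labeled_synth_loss_measurable: "labeled_synth_loss t \<in> borel_measurable (data T)"
proof -
  have Xl_data: "Xl t i \<in> borel_measurable (data T)" if "i < n t" for i
    using measurable_compose[OF labeled_sample_measurable[OF assms that] measurable_fst] by (simp add: comp_def)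
  show "unlabeled_synth_loss t \<in> borel_measurable (data T)"
    unfolding unlabeled_synth_loss_def[abs_def]
    by (intro borel_measurable_times borel_measurable_const borel_measurable_sum
        measurable_compose[OF unlabeled_sample_measurable[OF assms] synth_loss_measurable]) auto
  show "labeled_loss t \<in> borel_measurable (data T)"
    unfolding labeled_loss_def[abs_def]
    by (intro borel_measurable_times borel_measurable_const borel_measurable_sum
        measurable_compose[OF labeled_sample_measurable[OF assms] loss_measurable, simplified]) auto
  show "labeled_synth_loss t \<in> borel_measurable (data T)"
    unfolding labeled_synth_loss_def[abs_def]
    by (intro borel_measurable_times borel_measurable_const borel_measurable_sum
        measurable_compose[OF Xl_data synth_loss_measurable]) auto
qed

lemma
  assumes "1 \<le> t"
  shows unlabeled_synth_loss_range: "0 \<le> unlabeled_synth_loss t \<omega> \<and> unlabeled_synth_loss t \<omega> \<le> 1"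
    and labeled_loss_range: "0 \<le> labeled_loss t \<omega> \<and> labeled_loss t \<omega> \<le> 1"
    and labeled_synth_loss_range: "0 \<le> labeled_synth_loss t \<omega> \<and> labeled_synth_loss t \<omega> \<le> 1"
  unfolding unlabeled_synth_loss_def labeled_loss_def labeled_synth_loss_def
  by (rule average_nonneg_le_one; use sizes[OF assms] loss_range in simp)+


lemma integral_labeled_sample:
  fixes h :: "(real^'d) \<times> 'y \<Rightarrow> real"
  assumes "i < n t" "h \<in> borel_measurable (borel \<Otimes>\<^sub>M count_space UNIV)"
  shows "(\<integral>\<omega>. h (Xl t i \<omega>, Yl t i \<omega>) \<partial>M) = (\<integral>z. h z \<partial>P t)"
  using integral_distr[OF Xl_meas[of t i] assms(2)] lab_distr[OF assms(1)] by simp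

lemma integral_unlabeled_sample:
  fixes h :: "real^'d \<Rightarrow> real"
  assumes "j < N t" "h \<in> borel_measurable borel"
  shows "(\<integral>\<omega>. h (Xu t j \<omega>) \<partial>M) = (\<integral>z. h (fst z) \<partial>P t)"
proof -
  have "(\<integral>\<omega>. h (Xu t j \<omega>) \<partial>M) = (\<integral>x. h x \<partial>distr (P t) borel fst)"
    using integral_distr[OF Xu_meas[of t j] assms(2)] unl_distr[OF assms(1)] by simp
  also have "\<dots> = (\<integral>z. h (fst z) \<partial>P t)"
    using assms(2) by (intro integral_distr) (simp_all add: measurable_cong_sets[OF P(2) refl])
  finally show ?thesis .
qed

lemma
  assumes "1 \<le> t"
  shows integral_unlabeled_synth_loss: "(\<integral>\<omega>. unlabeled_synth_loss t \<omega> \<partial>M) = synth_risk t"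
    and integral_labeled_synth_loss: "(\<integral>\<omega>. labeled_synth_loss t \<omega> \<partial>M) = synth_risk t"
    and integral_labeled_loss: "(\<integral>\<omega>. labeled_loss t \<omega> \<partial>M) = R t"
proof -
  have synth_loss_fst: "(\<lambda>z. loss (f (fst z)) (synth_label fp (fst z))) \<in> borel_measurable (borel \<Otimes>\<^sub>M count_space UNIV)"
    using measurable_compose[OF measurable_fst[of borel "count_space UNIV"] synth_loss_measurable]
    by (simp add: comp_def)
  have Xl_M: "Xl t i \<in> borel_measurable M" for i
    using measurable_compose[OF Xl_meas measurable_fst] by (simp add: comp_def)
  have bounded: "\<bar>loss x y\<bar> \<le> 1" for x y
    using loss_range[of x y] by simp
  show "(\<integral>\<omega>. unlabeled_synth_loss t \<omega> \<partial>M) = synth_risk t"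
    unfolding unlabeled_synth_loss_def synth_risk_def using sizes[OF assms] bounded
    by (intro integral_average integrable_bounded measurable_compose[OF Xu_meas synth_loss_measurable])
       (simp_all add: integral_unlabeled_sample[OF _ synth_loss_measurable])
  show "(\<integral>\<omega>. labeled_synth_loss t \<omega> \<partial>M) = synth_risk t"
    unfolding labeled_synth_loss_def synth_risk_def using sizes[OF assms] bounded
    by (intro integral_average integrable_bounded measurable_compose[OF Xl_M synth_loss_measurable])
       (simp_all add: integral_labeled_sample[OF _ synth_loss_fst, simplified])
  show "(\<integral>\<omega>. labeled_loss t \<omega> \<partial>M) = R t"
    unfolding labeled_loss_def R_def using sizes[OF assms] bounded
    by (intro integral_average integrable_bounded measurable_compose[OF Xl_meas loss_measurable, simplified])
       (simp_all add: integral_labeled_sample[OF _ loss_measurable, simplified])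
qed


lemma Rpp_range:
  assumes "1 \<le> t" "\<omega> \<in> space M"
  shows "- \<eta>max \<le> Rpp t \<omega> \<and> Rpp t \<omega> \<le> 1 + \<eta>max"
proof -
  have \<eta>: "0 \<le> \<eta> t \<omega>" "\<eta> t \<omega> \<le> \<eta>max"
    using \<eta>_range[OF assms] by auto
  have "\<bar>unlabeled_synth_loss t \<omega> - labeled_synth_loss t \<omega>\<bar> \<le> 1"
    using unlabeled_synth_loss_range[OF assms(1), of \<omega>] labeled_synth_loss_range[OF assms(1), of \<omega>]
    by (auto simp: abs_le_iff)
  then have "\<bar>\<eta> t \<omega> * (unlabeled_synth_loss t \<omega> - labeled_synth_loss t \<omega>)\<bar> \<le> \<eta>max * 1"
    unfolding abs_mult using \<eta> by (intro mult_mono) auto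
  then show ?thesis
    unfolding Rpp_eq using labeled_loss_range[OF assms(1), of \<omega>] by (auto simp: abs_le_iff)
qed

lemma Z_range:
  assumes "1 \<le> t" "\<omega> \<in> space M" shows "0 \<le> Z t \<omega> \<and> Z t \<omega> \<le> 1"
  using Rpp_range[OF assms] scale_pos by (auto simp: Z_def field_simps)

lemma Zbar_range:
  assumes "\<omega> \<in> space M" shows "0 \<le> Zbar t \<omega> \<and> Zbar t \<omega> \<le> 1"
proof (cases "t = 0")
  case False
  have "0 \<le> (\<Sum>s\<in>{1..t}. Z s \<omega>)" "(\<Sum>s\<in>{1..t}. Z s \<omega>) \<le> real t"
    using Z_range[OF _ assms] sum_bounded_above[of "{1..t}" "\<lambda>s. Z s \<omega>" 1] by (auto intro: sum_nonneg)
  then show ?thesis using False by (simp add: Zbar_def field_simps)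
qed (use z0 in \<open>simp add: Zbar_def\<close>)

lemma R_range: "0 \<le> R t \<and> R t \<le> 1"
proof -
  interpret P: prob_space "P t" by (rule P(1))
  have "(\<lambda>z. loss (f (fst z)) (snd z)) \<in> borel_measurable (P t)"
    using loss_measurable by (simp add: measurable_cong_sets[OF P(2) refl])
  then have "R t \<le> (\<integral>z. 1 \<partial>P t)"
    unfolding R_def using loss_range
    by (intro integral_mono P.integrable_bounded[where B=1]) (auto simp: abs_le_iff)
  moreover have "0 \<le> R t"
    unfolding R_def using loss_range by (intro integral_nonneg_AE AE_I2) auto
  ultimately show ?thesis using P.prob_space by simp
qed

lemma scaled_risk_range: "0 \<le> scaled_risk t \<and> scaled_risk t \<le> 1"
  using R_range[of t] scale_pos \<eta>max by (auto simp: scaled_risk_def field_simps)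

lemma \<eta>_measurable: "1 \<le> s \<Longrightarrow> s \<le> t \<Longrightarrow> \<eta> s \<in> borel_measurable (data {1..t})"
  by (rule measurable_from_subalg[OF data_mono \<eta>_pred]) auto

lemma Rpp_measurable: "1 \<le> s \<Longrightarrow> s \<le> t \<Longrightarrow> Rpp s \<in> borel_measurable (data {1..t})"
  unfolding Rpp_eq[abs_def]
  by (intro borel_measurable_add borel_measurable_times borel_measurable_diff \<eta>_measurable
      labeled_loss_measurable unlabeled_synth_loss_measurable labeled_synth_loss_measurable) auto

lemma Z_measurable: "1 \<le> s \<Longrightarrow> s \<le> t \<Longrightarrow> Z s \<in> borel_measurable (data {1..t})"
  unfolding Z_def[abs_def] by (intro borel_measurable_divide borel_measurable_add Rpp_measurable) auto

lemma Zbar_measurable: "Zbar t \<in> borel_measurable (data {1..t})"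
proof (cases "t = 0")
  case False
  then have "Zbar t = (\<lambda>\<omega>. 1 / real t * (\<Sum>s\<in>{1..t}. Z s \<omega>))"
    by (simp add: Zbar_def[abs_def])
  also have "\<dots> \<in> borel_measurable (data {1..t})"
    by (intro borel_measurable_times borel_measurable_const borel_measurable_sum Z_measurable) auto
  finally show ?thesis .
qed (simp add: Zbar_def[abs_def])

lemma
  assumes "1 \<le> s"
  shows integral_synth_loss_difference: "(\<integral>\<omega>. unlabeled_synth_loss s \<omega> - labeled_synth_loss s \<omega> \<partial>M) = 0"
    and integral_labeled_loss_centered: "(\<integral>\<omega>. labeled_loss s \<omega> - R s \<partial>M) = 0"
proof -
  have "integrable M (unlabeled_synth_loss s)" "integrable M (labeled_synth_loss s)" "integrable M (labeled_loss s)"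
    using unlabeled_synth_loss_range[OF assms] labeled_synth_loss_range[OF assms] labeled_loss_range[OF assms]
      measurable_data_imp_measurable[OF unlabeled_synth_loss_measurable[of s "{s}"]]
      measurable_data_imp_measurable[OF labeled_synth_loss_measurable[of s "{s}"]]
      measurable_data_imp_measurable[OF labeled_loss_measurable[of s "{s}"]]
    by (auto intro!: integrable_bounded[where B=1])
  then show "(\<integral>\<omega>. unlabeled_synth_loss s \<omega> - labeled_synth_loss s \<omega> \<partial>M) = 0"
    "(\<integral>\<omega>. labeled_loss s \<omega> - R s \<partial>M) = 0"
    using integral_unlabeled_synth_loss[OF assms] integral_labeled_synth_loss[OF assms]
      integral_labeled_loss[OF assms] by (simp_all add: prob_space)
qed

text \<open>The labeled average is unbiased for the risk, and the unlabeled and labeled synthetic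
  averages have the same mean and are independent of the past, which determines \<eta>.\<close>
lemma Z_martingale_difference:
  assumes W: "W \<in> borel_measurable (data {1..t})" and W_bounded: "\<And>\<omega>. \<omega> \<in> space M \<Longrightarrow> \<bar>W \<omega>\<bar> \<le> K"
  shows "(\<integral>\<omega>. W \<omega> * (Z (Suc t) \<omega> - scaled_risk (Suc t)) \<partial>M) = 0"
proof -
  define s where "s = Suc t"
  have s: "1 \<le> s" "s \<in> {s}" "{1..t} \<inter> {s} = {}" by (simp_all add: s_def)
  define D where "D \<omega> = unlabeled_synth_loss s \<omega> - labeled_synth_loss s \<omega>" for \<omega>
  define E where "E \<omega> = labeled_loss s \<omega> - R s" for \<omega>
  have \<eta>W: "(\<lambda>\<omega>. W \<omega> * \<eta> s \<omega>) \<in> borel_measurable (data {1..t})"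
    using W \<eta>_pred[OF s(1)] by (simp add: s_def atLeastLessThanSuc_atLeastAtMost)
  have D: "D \<in> borel_measurable (data {s})" and E: "E \<in> borel_measurable (data {s})"
    unfolding D_def[abs_def] E_def[abs_def]
    using unlabeled_synth_loss_measurable[OF s(2)] labeled_synth_loss_measurable[OF s(2)]
      labeled_loss_measurable[OF s(2)] by simp_all
  have abs_D: "\<bar>D \<omega>\<bar> \<le> 1" and abs_E: "\<bar>E \<omega>\<bar> \<le> 1" for \<omega>
    using unlabeled_synth_loss_range[OF s(1), of \<omega>] labeled_synth_loss_range[OF s(1), of \<omega>]
      labeled_loss_range[OF s(1), of \<omega>] R_range[of s] by (auto simp: D_def E_def abs_le_iff)
  have abs_\<eta>W: "\<bar>W \<omega> * \<eta> s \<omega>\<bar> \<le> K * \<eta>max" if "\<omega> \<in> space M" for \<omega>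
    unfolding abs_mult using W_bounded[OF that] \<eta>_range[OF s(1) that] by (intro mult_mono) auto
  have "(\<integral>\<omega>. W \<omega> * E \<omega> \<partial>M) = 0"
  proof (rule integral_mult_indep_mean_zero[OF s(3) W E W_bounded])
    show "\<bar>E \<omega>\<bar> \<le> 1" for \<omega> by (rule abs_E)
    show "(\<integral>\<omega>. E \<omega> \<partial>M) = 0" using integral_labeled_loss_centered[OF s(1)] by (simp add: E_def)
  qed
  moreover have "(\<integral>\<omega>. (W \<omega> * \<eta> s \<omega>) * D \<omega> \<partial>M) = 0"
  proof (rule integral_mult_indep_mean_zero[OF s(3) \<eta>W D abs_\<eta>W])
    show "\<bar>D \<omega>\<bar> \<le> 1" for \<omega> by (rule abs_D)
    show "(\<integral>\<omega>. D \<omega> \<partial>M) = 0" using integral_synth_loss_difference[OF s(1)] by (simp add: D_def)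
  qed
  moreover have "W \<omega> * (Z s \<omega> - scaled_risk s) = (W \<omega> * E \<omega> + (W \<omega> * \<eta> s \<omega>) * D \<omega>) / (1 + 2 * \<eta>max)" for \<omega>
  proof -
    have "Rpp s \<omega> + \<eta>max - (R s + \<eta>max) = E \<omega> + \<eta> s \<omega> * D \<omega>"
      by (simp add: Rpp_eq D_def E_def algebra_simps)
    then have "Z s \<omega> - scaled_risk s = (E \<omega> + \<eta> s \<omega> * D \<omega>) / (1 + 2 * \<eta>max)"
      unfolding Z_def scaled_risk_def diff_divide_distrib[symmetric] by simp
    then show ?thesis by (simp add: ring_distribs mult.assoc add_divide_distrib)
  qed
  moreover have "integrable M (\<lambda>\<omega>. W \<omega> * E \<omega>)"
    using W_bounded abs_E measurable_data_imp_measurable[OF W] measurable_data_imp_measurable[OF E]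
    by (intro integrable_bounded_mult[where A=K and B=1]) auto
  moreover have "integrable M (\<lambda>\<omega>. (W \<omega> * \<eta> s \<omega>) * D \<omega>)"
    using abs_\<eta>W abs_D measurable_data_imp_measurable[OF \<eta>W] measurable_data_imp_measurable[OF D]
    by (intro integrable_bounded_mult[where A="K * \<eta>max" and B=1]) auto
  ultimately show ?thesis by (simp add: s_def)
qed

sublocale risk_process: empirical_bernstein_process M "\<lambda>t. data {1..t}" Z Zbar scaled_risk Q
proof (intro empirical_bernstein_process.intro empirical_bernstein_process_axioms.intro)
  show "prob_space M"
    by (rule prob_space_axioms)
  show "subalgebra M (data {1..t})" for t
    by (rule subalgebra_data)
  show "s \<le> t \<Longrightarrow> subalgebra (data {1..t}) (data {1..s})" for s t
    by (rule data_mono) auto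
  show "Z (Suc t) \<in> borel_measurable (data {1..Suc t})" for t
    by (rule Z_measurable) auto
  show "\<omega> \<in> space M \<Longrightarrow> 0 \<le> Z (Suc t) \<omega> \<and> Z (Suc t) \<omega> \<le> 1" for t \<omega>
    by (rule Z_range) auto
  show "0 \<le> scaled_risk (Suc t) \<and> scaled_risk (Suc t) \<le> 1" for t
    by (rule scaled_risk_range)
  show "Zbar t \<in> borel_measurable (data {1..t})" for t
    by (rule Zbar_measurable)
  show "\<omega> \<in> space M \<Longrightarrow> 0 \<le> Zbar t \<omega> \<and> Zbar t \<omega> \<le> 1" for t \<omega>
    by (rule Zbar_range)
  show "W \<in> borel_measurable (data {1..t}) \<Longrightarrow> (\<And>\<omega>. \<omega> \<in> space M \<Longrightarrow> \<bar>W \<omega>\<bar> \<le> K) \<Longrightarrow>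
      (\<integral>\<omega>. W \<omega> * (Z (Suc t) \<omega> - scaled_risk (Suc t)) \<partial>M) = 0" for t W K
    by (rule Z_martingale_difference)
qed (rule Q)+

lemma variance_proxy_eq: "risk_process.variance_proxy = V"
  by (simp add: fun_eq_iff risk_process.variance_proxy_def V_def)

lemma centered_sum_eq:
  "(1 + 2 * \<eta>max) * risk_process.centered_sum t \<omega> = (\<Sum>s\<in>{1..t}. Rpp s \<omega>) - (\<Sum>s\<in>{1..t}. R s)"
proof -
  have "(1 + 2 * \<eta>max) * (Z s \<omega> - scaled_risk s) = Rpp s \<omega> - R s" for s
    using scale_pos by (simp add: Z_def scaled_risk_def diff_divide_distrib[symmetric])
  then have "(1 + 2 * \<eta>max) * risk_process.centered_sum t \<omega> = (\<Sum>s\<in>{1..t}. Rpp s \<omega> - R s)"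
    unfolding risk_process.centered_sum_def sum_distrib_left by simp
  then show ?thesis by (simp add: sum_subtractf)
qed

lemma L_measurable: "L t \<in> borel_measurable M"
proof -
  have [measurable]: "u_bound Q \<delta>T \<in> borel_measurable borel"
    using u_bound_measurable[OF Q(3)] .
  have [measurable]: "V t \<in> borel_measurable M"
    using measurable_data_imp_measurable[OF risk_process.variance_proxy_measurable[of t]]
    by (simp add: variance_proxy_eq)
  have [measurable]: "Rpp s \<in> borel_measurable M" if "s \<in> {1..t}" for s
    using measurable_data_imp_measurable[OF Rpp_measurable[of s t]] that by simp
  have "L t = (\<lambda>\<omega>. ereal ((1 / real t) * (\<Sum>s\<in>{1..t}. Rpp s \<omega>))
      - ereal (1 + 2 * \<eta>max) * u_bound Q \<delta>T (V t \<omega>) / ereal (real t))"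
    by (simp add: L_def[abs_def])
  also have "\<dots> \<in> borel_measurable M" by measurable
  finally show ?thesis .
qed

lemma alarm_imp_crossing:
  assumes t: "1 \<le> t" and covered: "R 0 \<le> U0 \<omega>" and alarm: "ereal (U0 \<omega> + \<epsilon>tol) < L t \<omega>"
  shows "u_bound Q \<delta>T (V t \<omega>) < ereal (risk_process.centered_sum t \<omega>)"
proof (rule ccontr)
  assume "\<not> ?thesis"
  then have "ereal (risk_process.centered_sum t \<omega>) \<le> u_bound Q \<delta>T (V t \<omega>)" by simp
  then have "L t \<omega> \<le> ereal ((1 / real t) * (\<Sum>s\<in>{1..t}. Rpp s \<omega>)
      - (1 + 2 * \<eta>max) * risk_process.centered_sum t \<omega> / real t)"
    unfolding L_def using scale_pos t by (intro ereal_minus_scaled_le) auto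
  also have "\<dots> = ereal ((1 / real t) * (\<Sum>s\<in>{1..t}. R s))"
    unfolding centered_sum_eq by (simp add: diff_divide_distrib)
  also have "\<dots> \<le> ereal (U0 \<omega> + \<epsilon>tol)"
    using H0[OF t] covered by simp
  finally show False using alarm by simp
qed

theorem false_alarm_probability:
  "{\<omega> \<in> space M. \<exists>t\<ge>1. L t \<omega> > ereal (U0 \<omega> + \<epsilon>tol)} \<in> events
    \<and> prob {\<omega> \<in> space M. \<exists>t\<ge>1. L t \<omega> > ereal (U0 \<omega> + \<epsilon>tol)} \<le> \<delta>S + \<delta>T"
proof
  let ?alarm = "{\<omega> \<in> space M. \<exists>t\<ge>1. L t \<omega> > ereal (U0 \<omega> + \<epsilon>tol)}"
  let ?miscovered = "space M - {\<omega> \<in> space M. R 0 \<le> U0 \<omega>}"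
  let ?crossing = "{\<omega> \<in> space M. \<exists>t. u_bound Q \<delta>T (risk_process.variance_proxy t \<omega>)
      < ereal (risk_process.centered_sum t \<omega>)}"
  have [measurable]: "U0 \<in> borel_measurable M" "L t \<in> borel_measurable M" for t
    using measurable_data_imp_measurable[OF U0_meas] L_measurable by auto
  show "?alarm \<in> events" by measurable
  have covered_event: "{\<omega> \<in> space M. R 0 \<le> U0 \<omega>} \<in> events" by measurable
  note crossing = risk_process.confidence_sequence[OF \<delta>T]
  have "?alarm \<subseteq> ?miscovered \<union> ?crossing"
  proof
    fix \<omega> assume "\<omega> \<in> ?alarm"
    then obtain t where \<omega>: "\<omega> \<in> space M" "1 \<le> t" "ereal (U0 \<omega> + \<epsilon>tol) < L t \<omega>" by auto
    show "\<omega> \<in> ?miscovered \<union> ?crossing"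
    proof (cases "R 0 \<le> U0 \<omega>")
      case True
      then show ?thesis
        using alarm_imp_crossing[OF \<omega>(2) True \<omega>(3)] \<omega>(1) by (auto simp: variance_proxy_eq)
    qed (use \<omega>(1) in blast)
  qed
  then have "prob ?alarm \<le> prob (?miscovered \<union> ?crossing)"
    using covered_event crossing(1) by (intro finite_measure_mono) auto
  also have "\<dots> \<le> prob ?miscovered + prob ?crossing"
    using covered_event crossing(1) by (intro measure_Un_le) auto
  also have "\<dots> \<le> \<delta>S + \<delta>T"
    using prob_compl[OF covered_event] U0_cover crossing(2) by simp
  finally show "prob ?alarm \<le> \<delta>S + \<delta>T" .
qed

end

theorem theorem3p2:
  fixes M :: "'a measure"
    and P :: "nat \<Rightarrow> ((real^('d::finite)) \<times> 'y::finite) measure"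
    and f :: "real^'d \<Rightarrow> 'o" and loss :: "'o \<Rightarrow> 'y \<Rightarrow> real"
    and fp :: "real^'d \<Rightarrow> 'y \<Rightarrow> real"
    and n N :: "nat \<Rightarrow> nat"
    and Xl Xu :: "nat \<Rightarrow> nat \<Rightarrow> 'a \<Rightarrow> real^'d" and Yl :: "nat \<Rightarrow> nat \<Rightarrow> 'a \<Rightarrow> 'y"
    and \<eta> :: "nat \<Rightarrow> 'a \<Rightarrow> real" and \<eta>max :: real
    and z0 :: real and Q :: "real measure"
    and \<delta>S \<delta>T \<epsilon>tol :: real
    and U0 :: "'a \<Rightarrow> real"
    and R :: "nat \<Rightarrow> real" and Rpp Z Zbar V :: "nat \<Rightarrow> 'a \<Rightarrow> real" and L :: "nat \<Rightarrow> 'a \<Rightarrow> ereal"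
  assumes M: "prob_space M"
    and P: "\<And>t. prob_space (P t)" "\<And>t. sets (P t) = sets (borel \<Otimes>\<^sub>M count_space UNIV)"
    and loss_range: "\<And>out y. 0 \<le> loss out y \<and> loss out y \<le> 1"
    and loss_meas: "\<And>y. (\<lambda>x. loss (f x) y) \<in> borel_measurable borel"
    and fp_meas: "\<And>c. (\<lambda>x. fp x c) \<in> borel_measurable borel"
    and sizes: "\<And>t. t \<ge> 1 \<Longrightarrow> n t \<ge> 1 \<and> N t \<ge> 1"
    and Xl_meas: "\<And>t i. (\<lambda>\<omega>. (Xl t i \<omega>, Yl t i \<omega>)) \<in> measurable M (borel \<Otimes>\<^sub>M count_space UNIV)"
    and Xu_meas: "\<And>t j. Xu t j \<in> measurable M borel"
    and lab_distr: "\<And>t i. i < n t \<Longrightarrow>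
          distr M (borel \<Otimes>\<^sub>M count_space UNIV) (\<lambda>\<omega>. (Xl t i \<omega>, Yl t i \<omega>)) = P t"
    and unl_distr: "\<And>t j. j < N t \<Longrightarrow> distr M borel (Xu t j) = distr (P t) borel fst"
    and indep: "prob_space.indep_sets M (sample_sets M Xl Yl Xu) (sample_index n N)"
    and \<eta>max: "\<eta>max > 0"
    and \<eta>_range: "\<And>t \<omega>. t \<ge> 1 \<Longrightarrow> \<omega> \<in> space M \<Longrightarrow> 0 \<le> \<eta> t \<omega> \<and> \<eta> t \<omega> \<le> \<eta>max"
    and \<eta>_pred: "\<And>t. t \<ge> 1 \<Longrightarrow> \<eta> t \<in> borel_measurable (data_sigma M Xl Yl Xu n N {1..<t})"
    and z0: "0 \<le> z0" "z0 \<le> 1"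
    and \<delta>: "0 < \<delta>S" "\<delta>S < 1" "0 < \<delta>T" "\<delta>T < 1" "\<delta>S + \<delta>T < 1"
    and Q: "prob_space Q" "sets Q = sets borel" "AE l in Q. 0 \<le> l \<and> l < 1"
    and U0_meas: "U0 \<in> borel_measurable (data_sigma M Xl Yl Xu n N {0})"
    and \<epsilon>tol: "\<epsilon>tol > 0"
    and R_def: "\<And>t. R t = (\<integral>z. loss (f (fst z)) (snd z) \<partial>P t)"
    and U0_cover: "prob_space.prob M {\<omega> \<in> space M. R 0 \<le> U0 \<omega>} \<ge> 1 - \<delta>S"
    and H0: "\<And>t. t \<ge> 1 \<Longrightarrow> (1 / real t) * (\<Sum>t'\<in>{1..t}. R t') \<le> R 0 + \<epsilon>tol"
    and Rpp_def: "\<And>t \<omega>. Rpp t \<omega> =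
          \<eta> t \<omega> / real (N t) * (\<Sum>j<N t. loss (f (Xu t j \<omega>)) (synth_label fp (Xu t j \<omega>)))
        + 1 / real (n t) * (\<Sum>i<n t. loss (f (Xl t i \<omega>)) (Yl t i \<omega>))
        - \<eta> t \<omega> / real (n t) * (\<Sum>i<n t. loss (f (Xl t i \<omega>)) (synth_label fp (Xl t i \<omega>)))"
    and Z_def: "\<And>t \<omega>. Z t \<omega> = (Rpp t \<omega> + \<eta>max) / (1 + 2 * \<eta>max)"
    and Zbar_def: "\<And>t \<omega>. Zbar t \<omega> = (if t = 0 then z0 else (1 / real t) * (\<Sum>t'\<in>{1..t}. Z t' \<omega>))"
    and V_def: "\<And>t \<omega>. V t \<omega> = (\<Sum>t'\<in>{1..t}. (Z t' \<omega> - Zbar (t' - 1) \<omega>)\<^sup>2)"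
    and L_def: "\<And>t \<omega>. L t \<omega> =
          ereal ((1 / real t) * (\<Sum>t'\<in>{1..t}. Rpp t' \<omega>))
          - ereal (1 + 2 * \<eta>max) * u_bound Q \<delta>T (V t \<omega>) / ereal (real t)"
  shows "{\<omega> \<in> space M. \<exists>t\<ge>1. L t \<omega> > ereal (U0 \<omega> + \<epsilon>tol)} \<in> sets M
    \<and> prob_space.prob M {\<omega> \<in> space M. \<exists>t\<ge>1. L t \<omega> > ereal (U0 \<omega> + \<epsilon>tol)} \<le> \<delta>S + \<delta>T"
proof -
  interpret pprm M Xl Xu Yl n N P f loss fp \<eta> \<eta>max z0 Q \<delta>S \<delta>T \<epsilon>tol U0 R Rpp Z Zbar V L
    by (intro pprm.intro independent_samples.intro independent_samples_axioms.intro pprm_axioms.intro)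
      (rule assms; assumption)+
  show ?thesis
    by (rule false_alarm_probability)
qed

end
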